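(* Let $\Omega\subset\mathbb{R}^2$ be a bounded convex domain with $C^2$-smooth boundary of strictly positive curvature. Then there are constants $c,C>0$ such that for all $z\in 2\Omega$, $$c\,\operatorname{dist}(z,2\partial\Omega)^{3/2}\le\omega_\Omega(z)\le C\,\operatorname{dist}(z,2\partial\Omega)^{3/2}.$$
   Context: $m$ is Lebesgue measure on $\mathbb{R}^2$, $2\Omega=\{2x:x\in\Omega\}$, $2\partial\Omega=\partial(2\Omega)$, and $\omega_\Omega(x)=m(\Omega\cap(x-\Omega))/\max_{y\in\mathbb{R}^2}m(\Omega\cap(y-\Omega))$. *)

theory Defs
  imports "HOL-Analysis.Analysis"
begin

definition scale2 :: "(real^2) set \<Rightarrow> (real^2) set" where
  "scale2 \<Omega> = (\<lambda>x. (2::real) *\<^sub>R x) ` \<Omega>"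

definition covariogram :: "(real^2) set \<Rightarrow> real^2 \<Rightarrow> real" where
  "covariogram \<Omega> x = measure lebesgue (\<Omega> \<inter> (\<lambda>w. x - w) ` \<Omega>)"

definition omega :: "(real^2) set \<Rightarrow> real^2 \<Rightarrow> real" where
  "omega \<Omega> x = covariogram \<Omega> x / (SUP y. covariogram \<Omega> y)"

definition cross2 :: "real^2 \<Rightarrow> real^2 \<Rightarrow> real" where
  "cross2 u v = u$1 * v$2 - u$2 * v$1"

text \<open>Omega has C^2 boundary of strictly positive curvature: the boundary is a
  simple closed regular C^2 curve (1-periodic parametrisation, injective on one
  period) whose signed curvature (cross2 g' g'')/|g'|^3 is strictly positive.\<close>
definition C2_pos_curv_boundary :: "(real^2) set \<Rightarrow> bool" where
  "C2_pos_curv_boundary \<Omega> \<longleftrightarrow>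
     (\<exists>\<gamma> \<gamma>' \<gamma>'' :: real \<Rightarrow> real^2.
        (\<forall>t. \<gamma> (t + 1) = \<gamma> t) \<and>
        inj_on \<gamma> {0..<1} \<and>
        frontier \<Omega> = \<gamma> ` {0..1} \<and>
        (\<forall>t. (\<gamma> has_vector_derivative \<gamma>' t) (at t)) \<and>
        (\<forall>t. (\<gamma>' has_vector_derivative \<gamma>'' t) (at t)) \<and>
        continuous_on UNIV \<gamma>'' \<and>
        (\<forall>t. \<gamma>' t \<noteq> 0) \<and>
        (\<forall>t. cross2 (\<gamma>' t) (\<gamma>'' t) / norm (\<gamma>' t) ^ 3 > 0))"

end

theory Submission
  imports Defs
begin

text \<open>Let \<open>w \<in> \<Omega>\<close> be at distance \<open>\<delta>\<close> from \<open>\<partial>\<Omega>\<close>, attained at \<open>p = w + \<delta> N\<close> with \<open>N\<close> the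
  outer normal at \<open>p\<close>, and note \<open>\<omega>\<^sub>\<Omega>(2w)\<close> is proportional to the measure of
  \<open>\<Omega> \<inter> (2w - \<Omega>)\<close>. Uniformly positive curvature traps \<open>\<Omega>\<close> inside a parabola
  \<open>((x - p)\<cdot>T)\<^sup>2 \<le> K (p - x)\<cdot>N\<close> at every boundary point, so \<open>\<Omega> \<inter> (2w - \<Omega>)\<close> lies in a
  rectangle of size \<open>\<surd>(K\<delta>) \<times> \<delta>\<close> around \<open>w\<close>. Conversely, by Taylor expansion the boundary
  needs a parameter length of order \<open>\<surd>\<delta>\<close> to bend away by \<open>\<delta>/2\<close>, so convexity places a
  segment of length of order \<open>\<surd>\<delta>\<close> through \<open>w\<close> in the tangent direction, and with the inscribed
  ball a rectangle of size \<open>\<surd>\<delta> \<times> \<delta>\<close> symmetric about \<open>w\<close>, inside \<open>\<Omega>\<close>.\<close>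

section \<open>Planar geometry\<close>

definition rot90 :: "real^2 \<Rightarrow> real^2" where "rot90 v = vector [- v$2, v$1]"

lemma inner_vec2: "(x::real^2) \<bullet> y = x$1*y$1 + x$2*y$2"
  by (simp add: inner_vec_def sum_2)

lemma rot90_nth [simp]: "rot90 v $ 1 = - v$2" "rot90 v $ 2 = v$1"
  by (simp_all add: rot90_def)

lemma rot90_orthogonal [simp]: "rot90 v \<bullet> v = 0" "v \<bullet> rot90 v = 0"
  by (simp_all add: inner_vec2)

lemma norm_rot90 [simp]: "norm (rot90 v) = norm v"
  by (simp add: norm_eq_sqrt_inner inner_vec2)

lemma inner_rot90_eq_cross2: "w \<bullet> rot90 v = cross2 v w"
  by (simp add: inner_vec2 cross2_def)

lemma rot90_scaleR: "rot90 (a *\<^sub>R v) = a *\<^sub>R rot90 v"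
  by (simp add: vec_eq_iff forall_2)

lemma bounded_linear_rot90: "bounded_linear rot90"
proof -
  have "linear rot90" by (rule linearI) (simp_all add: vec_eq_iff forall_2)
  then show ?thesis by (simp add: linear_conv_bounded_linear)
qed

lemma unit_vec2_sq: "norm (T::real^2) = 1 \<Longrightarrow> T$1*T$1 + T$2*T$2 = 1"
  by (metis inner_vec2 norm_eq_1)

lemma orthonormal_decomp_rot90:
  assumes "norm (T::real^2) = 1"
  shows "x = (x \<bullet> T) *\<^sub>R T + (x \<bullet> rot90 T) *\<^sub>R rot90 T"
  using unit_vec2_sq[OF assms] unfolding vec_eq_iff forall_2 inner_vec2 by simp algebra

lemma norm_sq_orthonormal_decomp:
  assumes "norm (T::real^2) = 1"
  shows "(norm v)^2 = (v \<bullet> T)^2 + (v \<bullet> rot90 T)^2"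
proof -
  have "(norm v)^2 = v \<bullet> v" by (simp add: power2_norm_eq_inner)
  then show ?thesis
    using unit_vec2_sq[OF assms] unfolding inner_vec2 power2_eq_square by simp algebra
qed

lemma abs_inner_le_norm_unit: "norm a = 1 \<Longrightarrow> \<bar>x \<bullet> a\<bar> \<le> norm x"
  using Cauchy_Schwarz_ineq2[of x a] by simp

definition oriented_rect :: "real^2 \<Rightarrow> real^2 \<Rightarrow> real \<Rightarrow> real \<Rightarrow> (real^2) set" where
  "oriented_rect c T a b = {x. \<bar>(x - c) \<bullet> T\<bar> \<le> a \<and> \<bar>(x - c) \<bullet> rot90 T\<bar> \<le> b}"

lemma oriented_rect_measure:
  assumes T: "norm T = 1" and a: "0 \<le> a" and b: "0 \<le> b"
  shows "oriented_rect c T a b \<in> lmeasurable"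
    and "measure lebesgue (oriented_rect c T a b) = 4 * a * b"
proof -
  define f where "f v = (v$1) *\<^sub>R T + (v$2) *\<^sub>R rot90 T" for v :: "real^2"
  have TT: "T$1*T$1 + T$2*T$2 = 1" using unit_vec2_sq[OF T] .
  have "f v \<bullet> f v = v \<bullet> v" for v
    unfolding f_def inner_vec2 by simp (use TT in algebra)
  then have "norm (f v) = norm v" for v by (simp add: norm_eq_sqrt_inner)
  moreover have "linear f"
    by (rule linearI) (simp_all add: f_def algebra_simps)
  ultimately have orth: "orthogonal_transformation f"
    by (simp add: orthogonal_transformation)
  define B where "B = cbox (vector [-a, -b]) (vector [a, b] :: real^2)"
  have fT: "f v \<bullet> T = v$1" and fJ: "f v \<bullet> rot90 T = v$2" for v
    unfolding f_def by (simp_all add: inner_vec2, use TT in algebra, use TT in algebra)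
  have eq: "oriented_rect c T a b = (\<lambda>x. c + x) ` (f ` B)"
  proof (intro equalityI subsetI)
    fix x assume x: "x \<in> oriented_rect c T a b"
    define v where "v = (vector [(x - c) \<bullet> T, (x - c) \<bullet> rot90 T] :: real^2)"
    have "f v = x - c"
      unfolding f_def v_def using orthonormal_decomp_rot90[OF T, of "x - c"] by simp
    moreover have "v \<in> B" using x
      by (auto simp: B_def v_def oriented_rect_def mem_box_cart forall_2)
    ultimately show "x \<in> (\<lambda>x. c + x) ` (f ` B)"
      by (metis (no_types, lifting) add.commute diff_add_cancel image_eqI)
  next
    fix x assume "x \<in> (\<lambda>x. c + x) ` (f ` B)"
    then show "x \<in> oriented_rect c T a b"
      by (auto simp: oriented_rect_def fT fJ B_def mem_box_cart forall_2)
  qed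
  have "(vector [-a, -b] :: real^2) \<in> B" using a b by (auto simp: B_def mem_box_cart forall_2)
  then have "measure lborel B = (\<Prod>i\<in>UNIV. (vector [a, b] :: real^2)$i - (vector [-a, -b] :: real^2)$i)"
    unfolding B_def by (intro content_cbox_cart) auto
  also have "\<dots> = 4 * a * b" by (simp add: UNIV_2)
  finally have "measure lebesgue B = 4 * a * b" unfolding B_def by (subst measure_completion) auto
  then have "f ` B \<in> lmeasurable" "measure lebesgue (f ` B) = 4 * a * b"
    using measurable_orthogonal_image[OF orth] measure_orthogonal_image[OF orth]
    by (auto simp: B_def)
  then show "oriented_rect c T a b \<in> lmeasurable"
    and "measure lebesgue (oriented_rect c T a b) = 4 * a * b"
    unfolding eq using measure_translation[of c "f ` B"] measurable_translation[of "f ` B" c] by auto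
qed

lemma oriented_rect_reflect: "x \<in> oriented_rect c T a b \<Longrightarrow> 2 *\<^sub>R c - x \<in> oriented_rect c T a b"
proof -
  have "2 *\<^sub>R c - x - c = - (x - c)" by (simp add: algebra_simps scaleR_2)
  then show "x \<in> oriented_rect c T a b \<Longrightarrow> ?thesis"
    unfolding oriented_rect_def mem_Collect_eq by (simp only: inner_minus_left abs_minus_cancel)
qed

lemma oriented_rect_subset_ball:
  assumes T: "norm T = 1" and r: "0 < r"
  shows "oriented_rect c T (r/2) (r/2) \<subseteq> ball c r"
proof
  fix x assume "x \<in> oriented_rect c T (r/2) (r/2)"
  then have "\<bar>(x - c) \<bullet> T\<bar> \<le> r/2" "\<bar>(x - c) \<bullet> rot90 T\<bar> \<le> r/2"
    by (auto simp: oriented_rect_def)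
  then have "\<bar>(x - c) \<bullet> T\<bar>^2 \<le> (r/2)^2" "\<bar>(x - c) \<bullet> rot90 T\<bar>^2 \<le> (r/2)^2"
    by (meson abs_ge_zero power_mono)+
  then have "((x - c) \<bullet> T)^2 \<le> r^2/4" "((x - c) \<bullet> rot90 T)^2 \<le> r^2/4"
    by (simp_all add: power_divide)
  moreover have "0 < r^2" using r by simp
  ultimately have "(norm (x - c))^2 < r^2"
    using norm_sq_orthonormal_decomp[OF T, of "x - c"] by linarith
  then have "norm (x - c) < r" using r by (simp add: power_less_imp_less_base)
  then show "x \<in> ball c r" by (simp add: dist_norm norm_minus_commute)
qed

lemma convex_parabola_region: "convex {y. ((y - p) \<bullet> T)^2 \<le> K * ((p - y) \<bullet> N)}"
proof (rule convexI)
  fix x y and u v :: real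
  assume x: "x \<in> {y. ((y - p) \<bullet> T)^2 \<le> K * ((p - y) \<bullet> N)}"
    and y: "y \<in> {y. ((y - p) \<bullet> T)^2 \<le> K * ((p - y) \<bullet> N)}"
    and u: "0 \<le> u" and v: "0 \<le> v" and uv: "u + v = 1"
  define a where "a = (x - p) \<bullet> T"
  define b where "b = (y - p) \<bullet> T"
  define c where "c = (p - x) \<bullet> N"
  define d where "d = (p - y) \<bullet> N"
  have v1: "v = 1 - u" using uv by simp
  have iT: "(u *\<^sub>R x + v *\<^sub>R y - p) \<bullet> T = u * a + v * b"
    unfolding v1 by (simp add: a_def b_def algebra_simps)
  have iN: "(p - (u *\<^sub>R x + v *\<^sub>R y)) \<bullet> N = u * c + v * d"
    unfolding v1 by (simp add: c_def d_def algebra_simps)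
  have "(u * a + v * b)^2 \<le> u * a^2 + v * b^2"
  proof -
    have "u * a^2 + v * b^2 - (u * a + v * b)^2 = u * v * (a - b)^2"
      unfolding v1 by (simp add: power2_eq_square algebra_simps)
    moreover have "u * v * (a - b)^2 \<ge> 0" using u v by simp
    ultimately show ?thesis by linarith
  qed
  also have "\<dots> \<le> u * (K * c) + v * (K * d)"
    using x y u v by (intro add_mono mult_left_mono) (auto simp: a_def b_def c_def d_def)
  also have "\<dots> = K * (u * c + v * d)" by (simp add: algebra_simps)
  finally show "u *\<^sub>R x + v *\<^sub>R y \<in> {y. ((y - p) \<bullet> T)^2 \<le> K * ((p - y) \<bullet> N)}"
    using iT iN by simp
qed

lemma closure_in_halfspace:
  fixes S :: "'a::real_inner set"
  assumes "\<forall>x\<in>S. (x - p) \<bullet> a \<le> 0"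
  shows "\<forall>x\<in>closure S. (x - p) \<bullet> a \<le> 0"
proof -
  have eq: "{x. (x - p) \<bullet> a \<le> 0} = {x. a \<bullet> x \<le> a \<bullet> p}"
    by (auto simp: inner_diff_left inner_commute[of a])
  have "closure S \<subseteq> {x. (x - p) \<bullet> a \<le> 0}"
    by (rule closure_minimal) (use assms in auto, simp add: eq closed_halfspace_le)
  then show ?thesis by auto
qed

lemma convex_mem_between:
  assumes "convex S" and "w \<in> S" and "w + c *\<^sub>R v \<in> S" and "0 \<le> s / c" "s / c \<le> 1" and "c \<noteq> 0"
  shows "w + s *\<^sub>R v \<in> S"
proof -
  have "(1 - s / c) *\<^sub>R w + (s / c) *\<^sub>R (w + c *\<^sub>R v) \<in> S"
    using convexD[OF assms(1-3)] assms(4,5) by simp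
  moreover have "(1 - s / c) *\<^sub>R w + (s / c) *\<^sub>R (w + c *\<^sub>R v) = w + s *\<^sub>R v"
    using assms(6) by (simp add: algebra_simps)
  ultimately show ?thesis by simp
qed

section \<open>Second-order Taylor remainders\<close>

lemma has_vector_derivative_shift:
  assumes "(f has_vector_derivative v) (at (t0 + u))"
  shows "((\<lambda>u. f (t0 + u)) has_vector_derivative v) (at u)"
proof -
  have "((\<lambda>u. t0 + u) has_vector_derivative 1) (at u)"
    by (auto intro!: derivative_eq_intros)
  from vector_diff_chain_at[OF this assms] show ?thesis by (simp add: o_def)
qed

lemma quadratic_bound_of_second_derivative:
  fixes f f' f'' :: "real \<Rightarrow> 'a::real_normed_vector"
  assumes d1: "\<And>u. u \<in> {-r..r} \<Longrightarrow> (f has_vector_derivative f' u) (at u)"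
    and d2: "\<And>u. u \<in> {-r..r} \<Longrightarrow> (f' has_vector_derivative f'' u) (at u)"
    and f0: "f 0 = 0" and f'0: "f' 0 = 0"
    and B: "\<And>u. u \<in> {-r..r} \<Longrightarrow> norm (f'' u) \<le> B"
    and h: "\<bar>h\<bar> \<le> r"
  shows "norm (f h) \<le> B * h^2"
proof -
  have r: "0 \<le> r" using h by linarith
  have B0: "0 \<le> B" using B[of 0] r by (meson atLeastAtMost_iff neg_le_0_iff_le norm_ge_zero order_trans)
  have seg: "x \<in> {-r..r} \<and> \<bar>x\<bar> \<le> \<bar>u\<bar>" if "\<bar>u\<bar> \<le> r" "x \<in> closed_segment 0 u" for x u
    using that by (auto simp: closed_segment_eq_real_ivl split: if_splits)
  have onorm: "onorm (\<lambda>d. d *\<^sub>R v) = norm v" for v :: 'a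
    using onorm_scaleR_left[of "\<lambda>x::real. x" v] by (simp add: onorm_id)
  have f'_bound: "norm (f' u) \<le> B * \<bar>u\<bar>" if u: "\<bar>u\<bar> \<le> r" for u
  proof -
    have "norm (f' u - f' 0) \<le> B * norm (u - 0)"
    proof (rule differentiable_bound[of "closed_segment 0 u" f' "\<lambda>x d. d *\<^sub>R f'' x" B])
      show "(f' has_derivative (\<lambda>d. d *\<^sub>R f'' x)) (at x within closed_segment 0 u)"
        if "x \<in> closed_segment 0 u" for x
        using d2[of x] seg[OF u that] has_derivative_at_withinI
        unfolding has_vector_derivative_def by blast
      show "onorm (\<lambda>d. d *\<^sub>R f'' x) \<le> B" if "x \<in> closed_segment 0 u" for x
        using onorm B seg[OF u that] by simp
    qed auto
    then show ?thesis using f'0 by simp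
  qed
  have "norm (f h - f 0) \<le> (B * \<bar>h\<bar>) * norm (h - 0)"
  proof (rule differentiable_bound[of "closed_segment 0 h" f "\<lambda>x d. d *\<^sub>R f' x"])
    show "(f has_derivative (\<lambda>d. d *\<^sub>R f' x)) (at x within closed_segment 0 h)"
      if "x \<in> closed_segment 0 h" for x
      using d1[of x] seg[OF h that] has_derivative_at_withinI
      unfolding has_vector_derivative_def by blast
    show "onorm (\<lambda>d. d *\<^sub>R f' x) \<le> B * \<bar>h\<bar>" if "x \<in> closed_segment 0 h" for x
    proof -
      have "norm (f' x) \<le> B * \<bar>x\<bar>" using f'_bound seg[OF h that] by auto
      also have "\<dots> \<le> B * \<bar>h\<bar>" using seg[OF h that] B0 by (simp add: mult_left_mono)
      finally show ?thesis using onorm by simp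
    qed
  qed auto
  then show ?thesis using f0 by (simp add: power2_eq_square)
qed

section \<open>Covariogram and distance to the boundary\<close>

lemma mem_reflection_image: "x \<in> (\<lambda>w. z - w) ` S \<longleftrightarrow> z - x \<in> (S :: 'a::ab_group_add set)"
  by (auto intro: rev_image_eqI simp: algebra_simps)

lemma covariogram_set_lmeasurable:
  fixes S :: "(real^2) set"
  assumes "open S" "bounded S"
  shows "S \<inter> (\<lambda>w. z - w) ` S \<in> lmeasurable"
proof -
  have "(\<lambda>w. z - w) ` S = (\<lambda>x. z + x) ` (uminus ` S)"
    unfolding image_image by (rule image_cong) simp_all
  then have "open ((\<lambda>w. z - w) ` S)"
    using assms by (simp add: open_translation open_negations)
  then show ?thesis using assms by (intro lmeasurable_open) auto
qed

lemma covariogram_le_measure: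
  assumes "open S" "bounded S"
  shows "covariogram S y \<le> measure lebesgue S"
  unfolding covariogram_def
  using assms lmeasurable_open covariogram_set_lmeasurable[OF assms]
  by (intro measure_mono_fmeasurable) auto

lemma covariogram_ge_rect:
  assumes "open S" "bounded S" and sub: "oriented_rect w V a b \<subseteq> S"
    and V: "norm V = 1" and a: "0 \<le> a" and b: "0 \<le> b"
  shows "4 * a * b \<le> covariogram S (2 *\<^sub>R w)"
proof -
  have "oriented_rect w V a b \<subseteq> S \<inter> (\<lambda>v. 2 *\<^sub>R w - v) ` S"
  proof
    fix x assume "x \<in> oriented_rect w V a b"
    then show "x \<in> S \<inter> (\<lambda>v. 2 *\<^sub>R w - v) ` S"
      using sub oriented_rect_reflect[of x w V a b] by (auto simp: mem_reflection_image)
  qed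
  then have "measure lebesgue (oriented_rect w V a b) \<le> covariogram S (2 *\<^sub>R w)"
    unfolding covariogram_def
    using oriented_rect_measure[OF V a b] covariogram_set_lmeasurable[OF assms(1,2)]
    by (intro measure_mono_fmeasurable) auto
  then show ?thesis using oriented_rect_measure[OF V a b] by simp
qed

lemma infdist_frontier_pos:
  fixes S :: "'a::euclidean_space set"
  assumes "open S" "bounded S" "x \<in> S"
  shows "0 < infdist x (frontier S)"
proof (rule infdist_pos_not_in_closed)
  show "frontier S \<noteq> {}"
    using assms frontier_not_empty not_bounded_UNIV by blast
  show "x \<notin> frontier S" using assms by (simp add: frontier_def interior_open)
qed (rule frontier_closed)

lemma infdist_scaleR_image:
  fixes A :: "'a::real_normed_vector set"
  assumes c: "0 < c" and A: "A \<noteq> {}"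
  shows "infdist (c *\<^sub>R x) ((*\<^sub>R) c ` A) = c * infdist x A"
proof -
  have dist_scaled: "dist (c *\<^sub>R x) (c *\<^sub>R a) = c * dist x a" for a
    using c by (simp add: dist_norm flip: scaleR_diff_right)
  have cA: "(*\<^sub>R) c ` A \<noteq> {}" using A by simp
  show ?thesis
  proof (rule antisym)
    show "infdist (c *\<^sub>R x) ((*\<^sub>R) c ` A) \<le> c * infdist x A"
    proof -
      have "infdist (c *\<^sub>R x) ((*\<^sub>R) c ` A) / c \<le> dist x a" if "a \<in> A" for a
        using infdist_le[of "c *\<^sub>R a" "(*\<^sub>R) c ` A" "c *\<^sub>R x"] that c
        by (simp add: dist_scaled pos_divide_le_eq mult.commute)
      then have "infdist (c *\<^sub>R x) ((*\<^sub>R) c ` A) / c \<le> infdist x A"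
        unfolding infdist_notempty[OF A] by (intro cINF_greatest A)
      then show ?thesis using c by (simp add: pos_divide_le_eq mult.commute)
    qed
    show "c * infdist x A \<le> infdist (c *\<^sub>R x) ((*\<^sub>R) c ` A)"
      unfolding infdist_notempty[OF cA]
    proof (rule cINF_greatest[OF cA])
      fix y assume "y \<in> (*\<^sub>R) c ` A"
      then obtain a where "a \<in> A" "y = c *\<^sub>R a" by auto
      then show "c * infdist x A \<le> dist (c *\<^sub>R x) y"
        using infdist_le[of a A x] c by (simp add: dist_scaled)
    qed
  qed
qed

lemma frontier_scale2:
  assumes "open \<Omega>"
  shows "frontier (scale2 \<Omega>) = (*\<^sub>R) 2 ` frontier \<Omega>"
proof -
  have inj: "inj ((*\<^sub>R) (2::real) :: real^2 \<Rightarrow> real^2)" by (rule injI) simp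
  have "open (scale2 \<Omega>)" unfolding scale2_def using assms by (intro open_scaling) auto
  then have "frontier (scale2 \<Omega>) = closure (scale2 \<Omega>) - scale2 \<Omega>"
    by (simp add: frontier_def interior_open)
  also have "\<dots> = (*\<^sub>R) 2 ` (closure \<Omega> - \<Omega>)"
    by (simp add: scale2_def image_set_diff[OF inj] flip: closure_scaleR)
  finally show ?thesis using assms by (simp add: frontier_def interior_open)
qed

lemma powr_three_halves:
  assumes "0 \<le> (x::real)"
  shows "x powr (3/2) = x * sqrt x"
proof -
  have "x powr (3/2) = x powr (1 + 1/2)" by simp
  also have "\<dots> = x powr 1 * x powr (1/2)" by (rule powr_add)
  finally show ?thesis using assms by (simp add: powr_half_sqrt)
qed

lemma covariogram_le_Sup:
  assumes "open S" "bounded S"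
  shows "covariogram S y \<le> (SUP y. covariogram S y)"
  using covariogram_le_measure[OF assms] by (intro cSUP_upper bdd_aboveI2) auto

lemma Sup_covariogram_le_measure:
  assumes "open S" "bounded S"
  shows "(SUP y. covariogram S y) \<le> measure lebesgue S"
  using covariogram_le_measure[OF assms] by (intro cSUP_least) auto

lemma infdist_scale2_frontier:
  assumes "open \<Omega>" "bounded \<Omega>" "\<Omega> \<noteq> {}"
  shows "infdist (2 *\<^sub>R w) (frontier (scale2 \<Omega>)) = 2 * infdist w (frontier \<Omega>)"
proof -
  have "frontier \<Omega> \<noteq> {}" using assms(2,3) frontier_not_empty not_bounded_UNIV by blast
  then show ?thesis by (simp add: frontier_scale2[OF assms(1)] infdist_scaleR_image)
qed

text \<open>The normalising supremum of \<open>\<omega>\<^sub>\<Omega>\<close> lies between a positive value of the covariogram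
  and \<open>m(\<Omega>)\<close>, so it only affects the constants.\<close>
lemma omega_bounds_of_covariogram_bounds:
  assumes "open \<Omega>" "bounded \<Omega>" "\<Omega> \<noteq> {}" and c0: "0 < c0" and C0: "0 < C0"
    and bounds: "\<And>w. w \<in> \<Omega> \<Longrightarrow>
      c0 * infdist w (frontier \<Omega>) powr (3/2) \<le> covariogram \<Omega> (2 *\<^sub>R w) \<and>
      covariogram \<Omega> (2 *\<^sub>R w) \<le> C0 * infdist w (frontier \<Omega>) powr (3/2)"
  shows "\<exists>c C. c > 0 \<and> C > 0 \<and>
    (\<forall>z \<in> scale2 \<Omega>.
       c * infdist z (frontier (scale2 \<Omega>)) powr (3/2) \<le> omega \<Omega> z \<and>
       omega \<Omega> z \<le> C * infdist z (frontier (scale2 \<Omega>)) powr (3/2))"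
proof -
  have cov_pos: "0 < covariogram \<Omega> (2 *\<^sub>R w)" if "w \<in> \<Omega>" for w
  proof -
    have "0 < c0 * infdist w (frontier \<Omega>) powr (3/2)"
      using c0 infdist_frontier_pos[OF assms(1,2) that] by simp
    then show ?thesis using bounds[OF that] by linarith
  qed
  obtain w0 where w0: "w0 \<in> \<Omega>" using assms(3) by blast
  define S0 where "S0 = covariogram \<Omega> (2 *\<^sub>R w0)"
  define S where "S = (SUP y. covariogram \<Omega> y)"
  define m where "m = measure lebesgue \<Omega>"
  have S0: "0 < S0" "S0 \<le> S" using cov_pos[OF w0] covariogram_le_Sup[OF assms(1,2)]
    by (simp_all add: S0_def S_def)
  have S: "0 < S" "S \<le> m" using S0 Sup_covariogram_le_measure[OF assms(1,2)]
    by (simp_all add: S_def m_def)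
  define c where "c = c0 / (2 powr (3/2) * m)"
  define C where "C = C0 / (2 powr (3/2) * S0)"
  have "c * infdist z (frontier (scale2 \<Omega>)) powr (3/2) \<le> omega \<Omega> z \<and>
       omega \<Omega> z \<le> C * infdist z (frontier (scale2 \<Omega>)) powr (3/2)" if z: "z \<in> scale2 \<Omega>" for z
  proof -
    obtain w where w: "w \<in> \<Omega>" "z = 2 *\<^sub>R w" using z by (auto simp: scale2_def)
    define X where "X = infdist w (frontier \<Omega>) powr (3/2)"
    define g where "g = covariogram \<Omega> z"
    have dz: "infdist z (frontier (scale2 \<Omega>)) powr (3/2) = 2 powr (3/2) * X"
      using infdist_scale2_frontier[OF assms(1-3)] w(2) by (simp add: X_def powr_mult infdist_nonneg)
    have om: "omega \<Omega> z = g / S" by (simp add: omega_def g_def S_def)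
    have g: "c0 * X \<le> g" "g \<le> C0 * X" "0 < g"
      using bounds[OF w(1)] cov_pos[OF w(1)] w(2) by (auto simp: g_def X_def)
    have "c * (2 powr (3/2) * X) = c0 * X / m" by (simp add: c_def)
    also have "\<dots> \<le> g / m" using g S by (simp add: divide_right_mono)
    also have "\<dots> \<le> g / S" using g S by (simp add: frac_le)
    finally have lower: "c * (2 powr (3/2) * X) \<le> g / S" .
    have "g / S \<le> g / S0" using g S0 by (simp add: frac_le)
    also have "\<dots> \<le> C0 * X / S0" using g S0 by (simp add: divide_right_mono)
    also have "\<dots> = C * (2 powr (3/2) * X)" by (simp add: C_def)
    finally show ?thesis using lower dz om by simp
  qed
  moreover have "c > 0" "C > 0" using c0 C0 S S0 by (auto simp: c_def C_def)
  ultimately show ?thesis by blast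
qed

lemma ball_infdist_frontier_subset:
  fixes S :: "'a::euclidean_space set"
  assumes "x \<in> S"
  shows "ball x (infdist x (frontier S)) \<subseteq> S"
proof
  fix y assume y: "y \<in> ball x (infdist x (frontier S))"
  show "y \<in> S"
  proof (rule ccontr)
    assume "y \<notin> S"
    have "0 < infdist x (frontier S)" using y zero_le_dist[of x y] unfolding mem_ball by linarith
    then have "x \<in> ball x (infdist x (frontier S)) \<inter> S" using assms by simp
    moreover have "y \<in> ball x (infdist x (frontier S)) - S" using y \<open>y \<notin> S\<close> by simp
    ultimately have "ball x (infdist x (frontier S)) \<inter> frontier S \<noteq> {}"
      using connected_Int_frontier[OF connected_ball] by blast
    then obtain f where "f \<in> frontier S" "dist x f < infdist x (frontier S)" by auto
    then show False using infdist_le[of f "frontier S" x] by simp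
  qed
qed

lemma sq_infdist_frontier_le_covariogram:
  fixes S :: "(real^2) set"
  assumes "open S" "bounded S" "w \<in> S"
  shows "infdist w (frontier S)^2 \<le> covariogram S (2 *\<^sub>R w)"
proof -
  define \<delta> where "\<delta> = infdist w (frontier S)"
  have \<delta>: "0 < \<delta>" using infdist_frontier_pos[OF assms] by (simp add: \<delta>_def)
  have T: "norm (axis 1 1 :: real^2) = 1" by simp
  have "oriented_rect w (axis 1 1) (\<delta>/2) (\<delta>/2) \<subseteq> S"
    using oriented_rect_subset_ball[OF T \<delta>, of w] ball_infdist_frontier_subset[OF assms(3)]
    unfolding \<delta>_def by blast
  then have "4 * (\<delta>/2) * (\<delta>/2) \<le> covariogram S (2 *\<^sub>R w)"
    using \<delta> by (intro covariogram_ge_rect[OF assms(1,2) _ T]) auto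
  then show ?thesis by (simp add: \<delta>_def power2_eq_square)
qed

text \<open>If \<open>p \<in> \<partial>S\<close> is nearest to \<open>w\<close>, the half-plane through \<open>p\<close> orthogonal to \<open>p - w\<close>
  supports \<open>S\<close>: otherwise the segment from \<open>x \<in> S\<close> beyond \<open>p\<close> would meet the ball about \<open>w\<close>
  of radius \<open>|p - w|\<close>, which lies in \<open>S\<close>, and \<open>p\<close> would be a convex combination of points of \<open>S\<close>.\<close>
lemma convex_nearest_frontier_point_supports:
  fixes S :: "'a::euclidean_space set"
  assumes "convex S" "open S" and w: "w \<in> S" and p: "p \<in> frontier S"
    and nearest: "dist w p = infdist w (frontier S)" and x: "x \<in> S"
  shows "(x - p) \<bullet> (p - w) \<le> 0"
proof (rule ccontr)
  define kp where "kp = (x - p) \<bullet> (p - w)"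
  assume "\<not> (x - p) \<bullet> (p - w) \<le> 0"
  then have kp: "kp > 0" by (simp add: kp_def)
  have pS: "p \<notin> S" using p assms(2) by (simp add: frontier_def interior_open)
  define a where "a = p - w"
  define b where "b = p - x"
  have ab: "a \<bullet> b = - kp"
    by (simp add: a_def b_def kp_def inner_commute algebra_simps)
  have "b \<noteq> 0" using x pS by (auto simp: b_def)
  then have bb: "b \<bullet> b > 0" by simp
  define l where "l = kp / (b \<bullet> b)"
  have l: "l > 0" using kp bb by (simp add: l_def)
  have lbb: "l * (b \<bullet> b) = kp" using bb by (simp add: l_def)
  define y where "y = p + l *\<^sub>R b"
  have "(y - w) \<bullet> (y - w) = a \<bullet> a + 2 * l * (a \<bullet> b) + l * (l * (b \<bullet> b))"
    unfolding y_def a_def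
    by (simp add: inner_commute algebra_simps)
  also have "\<dots> = a \<bullet> a - l * kp" using ab lbb by (simp add: algebra_simps)
  finally have "(y - w) \<bullet> (y - w) < (p - w) \<bullet> (p - w)" using l kp by (simp add: a_def)
  then have "norm (y - w) < norm (p - w)" by (simp add: norm_eq_sqrt_inner)
  then have "dist w y < dist w p" by (simp add: dist_norm norm_minus_commute)
  then have yS: "y \<in> S" using ball_infdist_frontier_subset[OF w] nearest by auto
  have "p = (1 / (1 + l)) *\<^sub>R y + (l / (1 + l)) *\<^sub>R x"
  proof -
    have "(1 + l) *\<^sub>R p = y + l *\<^sub>R x" by (simp add: y_def b_def algebra_simps)
    then have "(1 / (1 + l)) *\<^sub>R ((1 + l) *\<^sub>R p) = (1 / (1 + l)) *\<^sub>R y + (l / (1 + l)) *\<^sub>R x"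
      by (simp add: scaleR_add_right)
    then show ?thesis using l by simp
  qed
  moreover have "(1 / (1 + l)) *\<^sub>R y + (l / (1 + l)) *\<^sub>R x \<in> S"
    using convexD[OF assms(1) yS x] l by (simp add: add_divide_distrib[symmetric])
  ultimately show False using pS by simp
qed

section \<open>Convex domains bounded by a positively curved \<open>C\<^sup>2\<close> curve\<close>

locale convex_C2_domain =
  fixes \<Omega> :: "(real^2) set" and \<gamma> \<gamma>' \<gamma>'' :: "real \<Rightarrow> real^2"
  assumes open_domain: "open \<Omega>" and bounded_domain: "bounded \<Omega>" and convex_domain: "convex \<Omega>"
    and periodic: "\<And>t. \<gamma> (t + 1) = \<gamma> t" and inj_period: "inj_on \<gamma> {0..<1}"
    and frontier_curve: "frontier \<Omega> = \<gamma> ` {0..1}"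
    and deriv1: "\<And>t. (\<gamma> has_vector_derivative \<gamma>' t) (at t)"
    and deriv2: "\<And>t. (\<gamma>' has_vector_derivative \<gamma>'' t) (at t)"
    and continuous_deriv2: "continuous_on UNIV \<gamma>''"
    and deriv1_nonzero: "\<And>t. \<gamma>' t \<noteq> 0"
    and curvature_pos: "\<And>t. cross2 (\<gamma>' t) (\<gamma>'' t) / norm (\<gamma>' t) ^ 3 > 0"
begin

definition unit_tangent :: "real \<Rightarrow> real^2" where
  "unit_tangent t = (1 / norm (\<gamma>' t)) *\<^sub>R \<gamma>' t"

text \<open>Positive curvature means the boundary is traversed counterclockwise, so the clockwise
  rotation of the tangent points out of \<open>\<Omega>\<close> (this is what \<open>supporting_normal_unique\<close> shows).\<close>
definition outer_normal :: "real \<Rightarrow> real^2" where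
  "outer_normal t = - rot90 (unit_tangent t)"

lemma continuous_on_deriv1: "continuous_on UNIV \<gamma>'"
  by (rule continuous_on_vector_derivative) (use deriv2 in auto)

lemma continuous_on_curve: "continuous_on UNIV \<gamma>"
  by (rule continuous_on_vector_derivative) (use deriv1 in auto)

lemma norm_unit_tangent [simp]: "norm (unit_tangent t) = 1"
  using deriv1_nonzero[of t] by (simp add: unit_tangent_def)

lemma norm_outer_normal [simp]: "norm (outer_normal t) = 1"
  by (simp add: outer_normal_def)

lemma inner_outer_normal_self [simp]: "outer_normal t \<bullet> outer_normal t = 1"
  using norm_outer_normal[of t] norm_eq_1 by blast

lemma outer_normal_orthogonal [simp]:
  "outer_normal t \<bullet> unit_tangent t = 0" "unit_tangent t \<bullet> outer_normal t = 0"
  by (simp_all add: outer_normal_def)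

lemma deriv1_inner_outer_normal [simp]: "\<gamma>' t \<bullet> outer_normal t = 0"
  by (simp add: outer_normal_def unit_tangent_def rot90_scaleR)

lemma deriv1_inner_unit_tangent: "\<gamma>' t \<bullet> unit_tangent t = norm (\<gamma>' t)"
  by (simp add: unit_tangent_def power2_norm_eq_inner[symmetric] power2_eq_square)

lemma deriv2_inner_outer_normal:
  "\<gamma>'' t \<bullet> outer_normal t = - cross2 (\<gamma>' t) (\<gamma>'' t) / norm (\<gamma>' t)"
  by (simp add: outer_normal_def unit_tangent_def rot90_scaleR inner_rot90_eq_cross2)

lemma frame_decomp: "v = (v \<bullet> unit_tangent t) *\<^sub>R unit_tangent t + (v \<bullet> outer_normal t) *\<^sub>R outer_normal t"
  using orthonormal_decomp_rot90[OF norm_unit_tangent[of t], of v] by (simp add: outer_normal_def)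

lemma continuous_on_outer_normal: "continuous_on UNIV outer_normal"
proof -
  have "continuous_on UNIV unit_tangent"
    unfolding unit_tangent_def using continuous_on_deriv1 deriv1_nonzero
    by (intro continuous_intros) auto
  then show ?thesis unfolding outer_normal_def
    by (intro continuous_intros bounded_linear.continuous_on[OF bounded_linear_rot90])
qed

lemma frontier_eq: "frontier \<Omega> = closure \<Omega> - \<Omega>"
  using open_domain by (simp add: frontier_def interior_open)

lemma periodic_minus: "\<gamma> (t - 1) = \<gamma> t"
  using periodic[of "t - 1"] by simp

lemma curve_in_frontier: "t \<in> {-1..2} \<Longrightarrow> \<gamma> t \<in> frontier \<Omega>"
proof -
  assume t: "t \<in> {-1..2}"
  consider "t \<in> {0..1}" | "t + 1 \<in> {0..1}" | "t - 1 \<in> {0..1}" using t by fastforce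
  then show ?thesis
    by cases (use frontier_curve periodic[of t] periodic_minus[of t] in \<open>metis image_eqI\<close>)+
qed

lemma curve_in_closure: "t \<in> {-1..2} \<Longrightarrow> \<gamma> t \<in> closure \<Omega>"
  using curve_in_frontier frontier_eq by auto

lemma frontier_curve_half_open: "frontier \<Omega> = \<gamma> ` {0..<1}"
proof -
  have "\<gamma> 1 \<in> \<gamma> ` {0..<1}" using periodic[of 0] by force
  moreover have "{0..1::real} = insert 1 {0..<1}" by auto
  ultimately show ?thesis using frontier_curve by (simp add: insert_absorb)
qed

lemma curve_shift_neq:
  assumes s: "s \<in> {0..1}" and h: "0 < h" "h < 1"
  shows "\<gamma> (s + h) \<noteq> \<gamma> s"
proof
  assume eq: "\<gamma> (s + h) = \<gamma> s"
  consider "s + h < 1" | "1 \<le> s + h" "s < 1" | "s = 1" using s by fastforce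
  then show False
  proof cases
    case 1
    then show False using inj_onD[OF inj_period eq] s h by auto
  next
    case 2
    then have "\<gamma> (s + h - 1) = \<gamma> s" using eq periodic_minus[of "s + h"] by simp
    then show False using inj_onD[OF inj_period] s h 2 by force
  next
    case 3
    then have "\<gamma> h = \<gamma> 0" using eq periodic[of 0] periodic_minus[of "1 + h"] by simp
    then show False using inj_onD[OF inj_period] h by force
  qed
qed

lemma speed_lower_bound: "\<exists>m0>0. \<forall>t\<in>{0..1}. m0 \<le> norm (\<gamma>' t)"
proof -
  have cont: "continuous_on {0..1} (\<lambda>t. norm (\<gamma>' t))"
    using continuous_on_deriv1 by (intro continuous_intros) (auto intro: continuous_on_subset)
  then obtain x where "x \<in> {0..1}" "\<forall>y\<in>{0..1}. norm (\<gamma>' x) \<le> norm (\<gamma>' y)"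
    using continuous_attains_inf[OF compact_Icc _ cont] by auto
  then show ?thesis using deriv1_nonzero[of x] by (intro exI[of _ "norm (\<gamma>' x)"]) auto
qed

lemma speed_upper_bound: "\<exists>M1. \<forall>t\<in>{0..1}. norm (\<gamma>' t) \<le> M1"
proof -
  have cont: "continuous_on {0..1} (\<lambda>t. norm (\<gamma>' t))"
    using continuous_on_deriv1 by (intro continuous_intros) (auto intro: continuous_on_subset)
  then obtain x where "\<forall>y\<in>{0..1}. norm (\<gamma>' y) \<le> norm (\<gamma>' x)"
    using continuous_attains_sup[OF compact_Icc _ cont] by auto
  then show ?thesis by blast
qed

lemma deriv2_bound: "\<exists>M\<ge>1. \<forall>t\<in>{-1..2}. norm (\<gamma>'' t) \<le> M"
proof -
  have cont: "continuous_on {-1..2} (\<lambda>t. norm (\<gamma>'' t))"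
    using continuous_deriv2 by (intro continuous_intros) (auto intro: continuous_on_subset)
  then obtain x where "\<forall>y\<in>{-1..2}. norm (\<gamma>'' y) \<le> norm (\<gamma>'' x)"
    using continuous_attains_sup[OF compact_Icc _ cont] by auto
  then show ?thesis by (intro exI[of _ "max 1 (norm (\<gamma>'' x))"]) auto
qed

lemma curvature_lower_bound:
  "\<exists>k>0. \<forall>t\<in>{0..1}. k \<le> cross2 (\<gamma>' t) (\<gamma>'' t) / norm (\<gamma>' t)"
proof -
  have cont: "continuous_on {0..1} (\<lambda>t. cross2 (\<gamma>' t) (\<gamma>'' t) / norm (\<gamma>' t))"
    unfolding cross2_def using continuous_on_deriv1 continuous_deriv2 deriv1_nonzero
    by (intro continuous_intros) (auto intro: continuous_on_subset)
  then obtain x where "x \<in> {0..1}"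
    "\<forall>y\<in>{0..1}. cross2 (\<gamma>' x) (\<gamma>'' x) / norm (\<gamma>' x) \<le> cross2 (\<gamma>' y) (\<gamma>'' y) / norm (\<gamma>' y)"
    using continuous_attains_inf[OF compact_Icc _ cont] by auto
  moreover have "0 < cross2 (\<gamma>' x) (\<gamma>'' x) / norm (\<gamma>' x)"
    using curvature_pos[of x] deriv1_nonzero[of x] by (simp add: zero_less_divide_iff)
  ultimately show ?thesis by blast
qed

lemma taylor1_remainder:
  assumes M: "\<forall>t\<in>{-1..2}. norm (\<gamma>'' t) \<le> M" and t0: "t0 \<in> {0..1}" and u: "\<bar>u\<bar> \<le> 1"
  shows "norm (\<gamma> (t0 + u) - \<gamma> t0 - u *\<^sub>R \<gamma>' t0) \<le> M * u^2"
proof (rule quadratic_bound_of_second_derivative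
    [where f' = "\<lambda>u. \<gamma>' (t0 + u) - \<gamma>' t0" and f'' = "\<lambda>u. \<gamma>'' (t0 + u)" and r = 1])
  fix v :: real assume v: "v \<in> {-1..1}"
  show "((\<lambda>u. \<gamma> (t0 + u) - \<gamma> t0 - u *\<^sub>R \<gamma>' t0) has_vector_derivative \<gamma>' (t0 + v) - \<gamma>' t0) (at v)"
    using has_vector_derivative_shift[OF deriv1[of "t0 + v"]]
    by (auto intro!: derivative_eq_intros)
  show "((\<lambda>u. \<gamma>' (t0 + u) - \<gamma>' t0) has_vector_derivative \<gamma>'' (t0 + v)) (at v)"
    using has_vector_derivative_shift[OF deriv2[of "t0 + v"]]
    by (auto intro!: derivative_eq_intros)
  show "norm (\<gamma>'' (t0 + v)) \<le> M" using M t0 v by auto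
qed (use u in auto)

lemma taylor2_remainder_uniform:
  assumes e: "e > 0"
  shows "\<exists>h>0. h \<le> 1 \<and> (\<forall>t0\<in>{0..1}. \<forall>u. \<bar>u\<bar> \<le> h \<longrightarrow>
     norm (\<gamma> (t0 + u) - \<gamma> t0 - u *\<^sub>R \<gamma>' t0 - (u^2/2) *\<^sub>R \<gamma>'' t0) \<le> e * u^2)"
proof -
  have "uniformly_continuous_on {-1..2} \<gamma>''"
    using continuous_deriv2 by (intro compact_uniformly_continuous) (auto intro: continuous_on_subset)
  then obtain d where d: "d > 0"
    and dd: "\<And>x x'. x \<in> {-1..2} \<Longrightarrow> x' \<in> {-1..2} \<Longrightarrow> dist x' x < d \<Longrightarrow> dist (\<gamma>'' x') (\<gamma>'' x) < e"
    unfolding uniformly_continuous_on_def using e by metis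
  define h where "h = min (d/2) 1"
  have h: "h > 0" "h \<le> 1" "h < d" using d by (auto simp: h_def)
  have "norm (\<gamma> (t0 + u) - \<gamma> t0 - u *\<^sub>R \<gamma>' t0 - (u^2/2) *\<^sub>R \<gamma>'' t0) \<le> e * u^2"
    if t0: "t0 \<in> {0..1}" and u: "\<bar>u\<bar> \<le> h" for t0 u
  proof (rule quadratic_bound_of_second_derivative
      [where f' = "\<lambda>u. \<gamma>' (t0 + u) - \<gamma>' t0 - u *\<^sub>R \<gamma>'' t0"
         and f'' = "\<lambda>u. \<gamma>'' (t0 + u) - \<gamma>'' t0" and r = h])
    fix v :: real assume v: "v \<in> {-h..h}"
    show "((\<lambda>u. \<gamma> (t0 + u) - \<gamma> t0 - u *\<^sub>R \<gamma>' t0 - (u^2/2) *\<^sub>R \<gamma>'' t0)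
        has_vector_derivative \<gamma>' (t0 + v) - \<gamma>' t0 - v *\<^sub>R \<gamma>'' t0) (at v)"
      using has_vector_derivative_shift[OF deriv1[of "t0 + v"]]
      by (auto intro!: derivative_eq_intros simp: power2_eq_square)
    show "((\<lambda>u. \<gamma>' (t0 + u) - \<gamma>' t0 - u *\<^sub>R \<gamma>'' t0) has_vector_derivative \<gamma>'' (t0 + v) - \<gamma>'' t0) (at v)"
      using has_vector_derivative_shift[OF deriv2[of "t0 + v"]]
      by (auto intro!: derivative_eq_intros)
    have "dist (\<gamma>'' (t0 + v)) (\<gamma>'' t0) < e"
      using dd[of t0 "t0 + v"] t0 v h by (auto simp: dist_real_def)
    then show "norm (\<gamma>'' (t0 + v) - \<gamma>'' t0) \<le> e" by (simp add: dist_norm)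
  qed (use u in auto)
  then show ?thesis using h by blast
qed

lemma curve_lipschitz_locally:
  "\<exists>L. \<forall>s\<in>{0..1}. \<forall>u. \<bar>u\<bar> \<le> 1 \<longrightarrow> norm (\<gamma> (s + u) - \<gamma> s) \<le> L * \<bar>u\<bar>"
proof -
  obtain M1 where M1: "\<forall>t\<in>{0..1}. norm (\<gamma>' t) \<le> M1" using speed_upper_bound by blast
  obtain M where M: "M \<ge> 1" "\<forall>t\<in>{-1..2}. norm (\<gamma>'' t) \<le> M" using deriv2_bound by blast
  have "norm (\<gamma> (s + u) - \<gamma> s) \<le> (M1 + M) * \<bar>u\<bar>" if s: "s \<in> {0..1}" and u: "\<bar>u\<bar> \<le> 1" for s u
  proof -
    have "\<bar>u\<bar> * \<bar>u\<bar> \<le> \<bar>u\<bar> * 1" using u by (intro mult_left_mono) auto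
    then have "u^2 \<le> \<bar>u\<bar>" by (simp add: power2_eq_square)
    then have "M * u^2 \<le> M * \<bar>u\<bar>" using M by (intro mult_left_mono) auto
    moreover have "norm (u *\<^sub>R \<gamma>' s) \<le> \<bar>u\<bar> * M1" using M1 s by (simp add: mult_left_mono)
    moreover have "norm (\<gamma> (s + u) - \<gamma> s) \<le> norm (u *\<^sub>R \<gamma>' s) + norm (\<gamma> (s + u) - \<gamma> s - u *\<^sub>R \<gamma>' s)"
      by (rule norm_triangle_sub)
    ultimately show ?thesis using taylor1_remainder[OF M(2) s u] by (simp add: algebra_simps)
  qed
  then show ?thesis by blast
qed

lemma curve_below_tangent_locally:
  "\<exists>h0 k. 0 < h0 \<and> h0 \<le> 1/4 \<and> 0 < k \<and> (\<forall>s\<in>{0..1}. \<forall>u. \<bar>u\<bar> \<le> h0 \<longrightarrow>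
      (\<gamma> (s + u) - \<gamma> s) \<bullet> outer_normal s \<le> -(k/4) * u^2)"
proof -
  obtain k where k: "k > 0" "\<forall>t\<in>{0..1}. k \<le> cross2 (\<gamma>' t) (\<gamma>'' t) / norm (\<gamma>' t)"
    using curvature_lower_bound by blast
  obtain h where h: "h > 0" and hb: "\<forall>t0\<in>{0..1}. \<forall>u. \<bar>u\<bar> \<le> h \<longrightarrow>
       norm (\<gamma> (t0 + u) - \<gamma> t0 - u *\<^sub>R \<gamma>' t0 - (u^2/2) *\<^sub>R \<gamma>'' t0) \<le> (k/4) * u^2"
    using taylor2_remainder_uniform[of "k/4"] k by auto
  have "(\<gamma> (s + u) - \<gamma> s) \<bullet> outer_normal s \<le> -(k/4) * u^2"
    if s: "s \<in> {0..1}" and u: "\<bar>u\<bar> \<le> h" for s u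
  proof -
    define E where "E = \<gamma> (s + u) - \<gamma> s - u *\<^sub>R \<gamma>' s - (u^2/2) *\<^sub>R \<gamma>'' s"
    have "\<bar>E \<bullet> outer_normal s\<bar> \<le> (k/4) * u^2"
      using abs_inner_le_norm_unit[OF norm_outer_normal, of E s] hb s u by (force simp: E_def)
    moreover have "(u^2/2) * (\<gamma>'' s \<bullet> outer_normal s) \<le> (u^2/2) * (-k)"
      using k s deriv2_inner_outer_normal[of s] by (intro mult_left_mono) auto
    moreover have "(\<gamma> (s + u) - \<gamma> s) \<bullet> outer_normal s = E \<bullet> outer_normal s + (u^2/2) * (\<gamma>'' s \<bullet> outer_normal s)"
      by (simp add: E_def inner_diff_left)
    ultimately show ?thesis by (simp add: algebra_simps)
  qed
  then show ?thesis using h k by (intro exI[of _ "min h (1/4)"] exI[of _ k]) auto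
qed

lemma supporting_normal_unique:
  assumes t0: "t0 \<in> {0..1}" and a: "norm a = 1" and supp: "\<forall>x\<in>\<Omega>. (x - \<gamma> t0) \<bullet> a \<le> 0"
  shows "a = outer_normal t0"
proof -
  have curve_below: "(\<gamma> (t0 + u) - \<gamma> t0) \<bullet> a \<le> 0" if "\<bar>u\<bar> \<le> 1" for u
  proof -
    have "\<gamma> (t0 + u) \<in> closure \<Omega>" by (rule curve_in_closure) (use t0 that in auto)
    then show ?thesis using closure_in_halfspace[OF supp] by blast
  qed
  have "((\<lambda>u. (\<gamma> (t0 + u) - \<gamma> t0) \<bullet> a) has_real_derivative (\<gamma>' t0 \<bullet> a)) (at 0)"
  proof -
    have "((\<lambda>u. \<gamma> (t0 + u) - \<gamma> t0) has_vector_derivative \<gamma>' t0) (at 0)"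
      using has_vector_derivative_shift[of \<gamma> "\<gamma>' t0" t0 0] deriv1[of t0]
      by (auto intro!: derivative_eq_intros)
    from bounded_linear.has_vector_derivative[OF bounded_linear_inner_left this]
    show ?thesis by (simp add: has_real_derivative_iff_has_vector_derivative)
  qed
  then have "\<gamma>' t0 \<bullet> a = 0"
    using curve_below by (intro DERIV_local_max[of _ _ 0 1]) auto
  then have "a \<bullet> unit_tangent t0 = 0" by (simp add: unit_tangent_def inner_commute)
  then have a_eq: "a = (a \<bullet> outer_normal t0) *\<^sub>R outer_normal t0"
    using frame_decomp[of a t0] by simp
  then have "\<bar>a \<bullet> outer_normal t0\<bar> = 1" using a by (metis norm_outer_normal norm_scaleR mult.right_neutral)
  moreover have "a \<bullet> outer_normal t0 \<noteq> -1"
  proof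
    assume "a \<bullet> outer_normal t0 = -1"
    then have "a = - outer_normal t0" using a_eq by simp
    moreover obtain h0 k where h0: "0 < h0" "h0 \<le> 1/4" and k: "0 < k"
      and "(\<gamma> (t0 + h0) - \<gamma> t0) \<bullet> outer_normal t0 \<le> -(k/4) * h0^2"
      using curve_below_tangent_locally t0 by fastforce
    ultimately have "(k/4) * h0^2 \<le> (\<gamma> (t0 + h0) - \<gamma> t0) \<bullet> a" by simp
    moreover have "0 < (k/4) * h0^2" using h0 k by simp
    moreover have "(\<gamma> (t0 + h0) - \<gamma> t0) \<bullet> a \<le> 0" using curve_below h0 by simp
    ultimately show False by linarith
  qed
  ultimately have "a \<bullet> outer_normal t0 = 1" by linarith
  then show ?thesis using a_eq by simp
qed

lemma closure_below_tangent:
  assumes t0: "t0 \<in> {0..1}" and x: "x \<in> closure \<Omega>"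
  shows "(x - \<gamma> t0) \<bullet> outer_normal t0 \<le> 0"
proof -
  let ?p = "\<gamma> t0"
  have "?p \<in> closure \<Omega>" "?p \<notin> rel_interior \<Omega>"
    using frontier_curve frontier_eq rel_interior_open[OF open_domain] t0 by auto
  then obtain a where a: "a \<noteq> 0" and ha: "\<And>y. y \<in> closure \<Omega> \<Longrightarrow> a \<bullet> ?p \<le> a \<bullet> y"
    using supporting_hyperplane_relative_frontier[OF convex_domain] by metis
  define b where "b = - (1 / norm a) *\<^sub>R a"
  have hb: "(y - ?p) \<bullet> b \<le> 0" if "y \<in> closure \<Omega>" for y
    using ha[OF that] a by (simp add: b_def inner_commute inner_diff_right)
  have "\<forall>y\<in>\<Omega>. (y - ?p) \<bullet> b \<le> 0" using hb closure_subset by blast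
  then have "b = outer_normal t0" using supporting_normal_unique[OF t0] a by (simp add: b_def)
  then show ?thesis using hb[OF x] by simp
qed

lemma interior_strictly_below_tangent:
  assumes t0: "t0 \<in> {0..1}" and x: "x \<in> \<Omega>"
  shows "(x - \<gamma> t0) \<bullet> outer_normal t0 < 0"
proof -
  obtain e where e: "e > 0" "ball x e \<subseteq> \<Omega>" using open_domain x open_contains_ball by blast
  have "x + (e/2) *\<^sub>R outer_normal t0 \<in> closure \<Omega>"
    using e closure_subset by (force simp: dist_norm)
  from closure_below_tangent[OF t0 this] have "(x - \<gamma> t0) \<bullet> outer_normal t0 + e/2 \<le> 0"
    by (simp add: inner_add_left inner_diff_left)
  then show ?thesis using e by linarith
qed

lemma flat_boundary_parameters_finite:
  assumes t0: "t0 \<in> {0..1}" and S: "S \<subseteq> {0..1}"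
    and flat: "\<And>s. s \<in> S \<Longrightarrow> (\<gamma> s - \<gamma> t0) \<bullet> outer_normal t0 = 0"
  shows "finite S"
proof (rule ccontr)
  assume "infinite S"
  obtain h0 k where h0: "0 < h0" and k: "0 < k" and below: "\<forall>s\<in>{0..1}. \<forall>u. \<bar>u\<bar> \<le> h0 \<longrightarrow>
      (\<gamma> (s + u) - \<gamma> s) \<bullet> outer_normal s \<le> -(k/4) * u^2"
    using curve_below_tangent_locally by blast
  obtain x where "x islimpt S"
    using compact_eq_Bolzano_Weierstrass[of "{0..1::real}"] \<open>infinite S\<close> S by auto
  then have "infinite (S \<inter> ball x (h0/2))" using h0 unfolding islimpt_eq_infinite_ball by simp
  then obtain s1 where s1: "s1 \<in> S" "s1 \<in> ball x (h0/2)"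
    by (metis IntE ex_in_conv finite.emptyI)
  have "infinite (S \<inter> ball x (h0/2) - {s1})" using \<open>infinite (S \<inter> ball x (h0/2))\<close> by simp
  then obtain s2 where s2: "s2 \<in> S" "s2 \<in> ball x (h0/2)" "s2 \<noteq> s1"
    by (metis DiffE IntE ex_in_conv finite.emptyI singletonI)
  have near: "\<bar>s2 - s1\<bar> \<le> h0"
    using s1(2) s2(2) by (auto simp: dist_real_def abs_if split: if_splits)
  have s1_01: "s1 \<in> {0..1}" using s1 S by blast
  have "\<forall>y\<in>\<Omega>. (y - \<gamma> s1) \<bullet> outer_normal t0 \<le> 0"
  proof
    fix y assume "y \<in> \<Omega>"
    have "(y - \<gamma> s1) \<bullet> outer_normal t0 = (y - \<gamma> t0) \<bullet> outer_normal t0 - (\<gamma> s1 - \<gamma> t0) \<bullet> outer_normal t0"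
      by (simp add: inner_diff_left)
    then show "(y - \<gamma> s1) \<bullet> outer_normal t0 \<le> 0"
      using interior_strictly_below_tangent[OF t0 \<open>y \<in> \<Omega>\<close>] flat[OF s1(1)] by simp
  qed
  then have "outer_normal t0 = outer_normal s1"
    using supporting_normal_unique[OF s1_01 norm_outer_normal] by blast
  moreover have "(\<gamma> (s1 + (s2 - s1)) - \<gamma> s1) \<bullet> outer_normal s1 \<le> -(k/4) * (s2 - s1)^2"
    using below s1_01 near by blast
  ultimately have "(\<gamma> s2 - \<gamma> s1) \<bullet> outer_normal t0 \<le> -(k/4) * (s2 - s1)^2" by simp
  moreover have "(\<gamma> s2 - \<gamma> s1) \<bullet> outer_normal t0 = 0"
    using flat[OF s1(1)] flat[OF s2(1)] by (simp add: inner_diff_left)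
  moreover have "0 < (k/4) * (s2 - s1)^2" using k s2(3) by simp
  ultimately show False by linarith
qed

lemma chord_below_tangent:
  assumes t0: "t0 \<in> {0..1}" and h: "0 < h" "h < 1"
  shows "0 < (\<gamma> t0 - \<gamma> (t0 + h)) \<bullet> outer_normal t0"
proof (rule ccontr)
  assume not_below: "\<not> ?thesis"
  define p where "p = \<gamma> t0"
  define q where "q = \<gamma> (t0 + h)"
  have qc: "q \<in> closure \<Omega>" unfolding q_def by (rule curve_in_closure) (use t0 h in auto)
  have pc: "p \<in> closure \<Omega>" unfolding p_def by (rule curve_in_closure) (use t0 in auto)
  have "(q - p) \<bullet> outer_normal t0 = 0"
    using closure_below_tangent[OF t0 qc] not_below
    by (simp add: p_def q_def inner_diff_left)
  then have on_line: "(x - p) \<bullet> outer_normal t0 = 0" if x: "x \<in> open_segment p q" for x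
  proof -
    obtain m where "x = (1 - m) *\<^sub>R p + m *\<^sub>R q" using x unfolding in_segment(2) by blast
    then have "x - p = m *\<^sub>R (q - p)" by (simp add: algebra_simps)
    then show ?thesis using \<open>(q - p) \<bullet> outer_normal t0 = 0\<close> by simp
  qed
  have seg_frontier: "open_segment p q \<subseteq> \<gamma> ` {0..<1}"
  proof
    fix x assume x: "x \<in> open_segment p q"
    have "x \<in> closure \<Omega>"
      using convex_closure[OF convex_domain] pc qc x open_closed_segment
      by (meson convex_contains_segment subsetD)
    moreover have "x \<notin> \<Omega>"
      using interior_strictly_below_tangent[OF t0] on_line[OF x] by (force simp: p_def)
    ultimately show "x \<in> \<gamma> ` {0..<1}" using frontier_eq frontier_curve_half_open by auto
  qed
  define S where "S = {s\<in>{0..<1}. \<gamma> s \<in> open_segment p q}"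
  have "p \<noteq> q" using curve_shift_neq[OF t0 h] by (simp add: p_def q_def)
  then have "infinite (open_segment p q)" by simp
  moreover have "open_segment p q \<subseteq> \<gamma> ` S" using seg_frontier by (auto simp: S_def)
  ultimately have "infinite S" by (meson finite_imageI finite_subset)
  moreover have "finite S"
    by (rule flat_boundary_parameters_finite[OF t0]) (use on_line in \<open>auto simp: S_def p_def\<close>)
  ultimately show False by blast
qed

lemma chord_uniformly_below_tangent:
  assumes h0: "0 < h0" "h0 \<le> 1/4"
  shows "\<exists>c>0. \<forall>t0\<in>{0..1}. \<forall>h\<in>{h0..1-h0}. c \<le> (\<gamma> t0 - \<gamma> (t0 + h)) \<bullet> outer_normal t0"
proof -
  define K where "K = {0..1::real} \<times> {h0..1-h0}"
  define F where "F = (\<lambda>z::real\<times>real. (\<gamma> (fst z) - \<gamma> (fst z + snd z)) \<bullet> outer_normal (fst z))"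
  have "continuous_on K (\<lambda>z. \<gamma> (fst z))"
    by (intro continuous_on_compose2[OF continuous_on_curve] continuous_intros) auto
  moreover have "continuous_on K (\<lambda>z. \<gamma> (fst z + snd z))"
    by (intro continuous_on_compose2[OF continuous_on_curve] continuous_intros) auto
  moreover have "continuous_on K (\<lambda>z. outer_normal (fst z))"
    by (intro continuous_on_compose2[OF continuous_on_outer_normal] continuous_intros) auto
  ultimately have "continuous_on K F" unfolding F_def by (intro continuous_intros)
  moreover have "compact K" "K \<noteq> {}" using h0 by (auto simp: K_def intro!: compact_Times)
  ultimately obtain z where z: "z \<in> K" "\<forall>y\<in>K. F z \<le> F y"
    using continuous_attains_inf by blast
  have "F z > 0" using z(1) h0 chord_below_tangent[of "fst z" "snd z"] by (auto simp: K_def F_def)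
  then show ?thesis using z(2) by (intro exI[of _ "F z"]) (auto simp: K_def F_def)
qed

lemma boundary_parameter_cases:
  assumes h0: "0 < h0" "h0 \<le> 1/4" and t0: "t0 \<in> {0..1}" and t: "t \<in> {0..1}"
  obtains u where "\<bar>u\<bar> \<le> h0" "\<gamma> t = \<gamma> (t0 + u)" | h where "h \<in> {h0..1-h0}" "\<gamma> t = \<gamma> (t0 + h)"
proof -
  consider "\<bar>t - t0\<bar> \<le> h0" | "t - t0 \<in> {h0..1-h0}" | "\<bar>t - t0 - 1\<bar> \<le> h0"
    | "t - t0 + 1 \<in> {h0..1-h0}" | "\<bar>t - t0 + 1\<bar> \<le> h0"
    using t t0 h0 by fastforce
  then show ?thesis
  proof cases
    case 1 then show ?thesis using that(1)[of "t - t0"] by simp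
  next
    case 2 then show ?thesis using that(2)[of "t - t0"] by simp
  next
    case 3 then show ?thesis using that(1)[of "t - t0 - 1"] periodic_minus[of t] by simp
  next
    case 4 then show ?thesis using that(2)[of "t - t0 + 1"] periodic[of t] by simp
  next
    case 5 then show ?thesis using that(1)[of "t - t0 + 1"] periodic[of t] by simp
  qed
qed

lemma frontier_within_parabola_locally:
  "\<exists>h0 K. 0 < h0 \<and> h0 \<le> 1/4 \<and> 0 < K \<and> (\<forall>t0\<in>{0..1}. \<forall>u. \<bar>u\<bar> \<le> h0 \<longrightarrow>
     ((\<gamma> (t0 + u) - \<gamma> t0) \<bullet> unit_tangent t0)^2 \<le> K * ((\<gamma> t0 - \<gamma> (t0 + u)) \<bullet> outer_normal t0))"
proof -
  obtain h0 k where h0: "0 < h0" "h0 \<le> 1/4" and k: "0 < k" and below: "\<forall>s\<in>{0..1}. \<forall>u. \<bar>u\<bar> \<le> h0 \<longrightarrow>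
      (\<gamma> (s + u) - \<gamma> s) \<bullet> outer_normal s \<le> -(k/4) * u^2"
    using curve_below_tangent_locally by blast
  obtain L where L: "\<forall>s\<in>{0..1}. \<forall>u. \<bar>u\<bar> \<le> 1 \<longrightarrow> norm (\<gamma> (s + u) - \<gamma> s) \<le> L * \<bar>u\<bar>"
    using curve_lipschitz_locally by blast
  define K where "K = max 1 (4 * L^2 / k)"
  have "((\<gamma> (t0 + u) - \<gamma> t0) \<bullet> unit_tangent t0)^2 \<le> K * ((\<gamma> t0 - \<gamma> (t0 + u)) \<bullet> outer_normal t0)"
    if t0: "t0 \<in> {0..1}" and u: "\<bar>u\<bar> \<le> h0" for t0 u
  proof -
    define v where "v = \<gamma> (t0 + u) - \<gamma> t0"
    have depth: "(k/4) * u^2 \<le> (\<gamma> t0 - \<gamma> (t0 + u)) \<bullet> outer_normal t0"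
      using below t0 u by (force simp: inner_diff_left)
    have "(v \<bullet> unit_tangent t0)^2 \<le> (norm v)^2"
      using norm_sq_orthonormal_decomp[OF norm_unit_tangent[of t0], of v] by simp
    also have "\<dots> \<le> (L * \<bar>u\<bar>)^2" using L t0 u h0 by (intro power_mono) (auto simp: v_def)
    also have "\<dots> = (4 * L^2 / k) * ((k/4) * u^2)" using k by (simp add: field_simps)
    also have "\<dots> \<le> K * ((\<gamma> t0 - \<gamma> (t0 + u)) \<bullet> outer_normal t0)"
      using depth k by (intro mult_mono) (auto simp: K_def)
    finally show ?thesis by (simp add: v_def)
  qed
  then show ?thesis using h0 by (intro exI[of _ h0] exI[of _ K]) (auto simp: K_def)
qed

lemma frontier_within_parabola:
  "\<exists>K>0. \<forall>t0\<in>{0..1}. \<forall>q\<in>frontier \<Omega>.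
     ((q - \<gamma> t0) \<bullet> unit_tangent t0)^2 \<le> K * ((\<gamma> t0 - q) \<bullet> outer_normal t0)"
proof -
  obtain h0 K1 where h0: "0 < h0" "h0 \<le> 1/4" and K1: "0 < K1" and near: "\<forall>t0\<in>{0..1}. \<forall>u. \<bar>u\<bar> \<le> h0 \<longrightarrow>
     ((\<gamma> (t0 + u) - \<gamma> t0) \<bullet> unit_tangent t0)^2 \<le> K1 * ((\<gamma> t0 - \<gamma> (t0 + u)) \<bullet> outer_normal t0)"
    using frontier_within_parabola_locally by blast
  obtain c where c: "0 < c" "\<forall>t0\<in>{0..1}. \<forall>h\<in>{h0..1-h0}. c \<le> (\<gamma> t0 - \<gamma> (t0 + h)) \<bullet> outer_normal t0"
    using chord_uniformly_below_tangent[OF h0] by blast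
  define D where "D = diameter (closure \<Omega>)"
  define K where "K = max K1 (D^2 / c)"
  have "((q - \<gamma> t0) \<bullet> unit_tangent t0)^2 \<le> K * ((\<gamma> t0 - q) \<bullet> outer_normal t0)"
    if t0: "t0 \<in> {0..1}" and q: "q \<in> frontier \<Omega>" for t0 q
  proof -
    obtain t where t: "t \<in> {0..1}" "q = \<gamma> t" using q frontier_curve by auto
    have qp: "q \<in> closure \<Omega>" "\<gamma> t0 \<in> closure \<Omega>"
      using q t0 frontier_curve frontier_eq by auto
    have depth: "0 \<le> (\<gamma> t0 - q) \<bullet> outer_normal t0"
      using closure_below_tangent[OF t0 qp(1)] by (simp add: inner_diff_left)
    show ?thesis
    proof (cases rule: boundary_parameter_cases[OF h0 t0 t(1)])
      case (1 u)
      then have "((q - \<gamma> t0) \<bullet> unit_tangent t0)^2 \<le> K1 * ((\<gamma> t0 - q) \<bullet> outer_normal t0)"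
        using near t0 t(2) by simp
      also have "\<dots> \<le> K * ((\<gamma> t0 - q) \<bullet> outer_normal t0)"
        using depth by (intro mult_right_mono) (auto simp: K_def)
      finally show ?thesis .
    next
      case (2 h)
      have "((q - \<gamma> t0) \<bullet> unit_tangent t0)^2 \<le> (norm (q - \<gamma> t0))^2"
        using norm_sq_orthonormal_decomp[OF norm_unit_tangent[of t0], of "q - \<gamma> t0"] by simp
      also have "\<dots> \<le> D^2"
        using diameter_bounded_bound[OF bounded_closure[OF bounded_domain] qp]
        by (intro power_mono) (auto simp: D_def dist_norm)
      also have "\<dots> = (D^2 / c) * c" using c by simp
      also have "\<dots> \<le> K * ((\<gamma> t0 - q) \<bullet> outer_normal t0)"
        using c t0 2 t(2) K1 by (intro mult_mono) (auto simp: K_def)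
      finally show ?thesis .
    qed
  qed
  moreover have "0 < K" using K1 by (simp add: K_def)
  ultimately show ?thesis by blast
qed

lemma domain_within_parabola:
  "\<exists>K>0. \<forall>t0\<in>{0..1}. \<forall>x\<in>\<Omega>.
     ((x - \<gamma> t0) \<bullet> unit_tangent t0)^2 \<le> K * ((\<gamma> t0 - x) \<bullet> outer_normal t0)"
proof -
  obtain K where K: "0 < K" and fr: "\<forall>t0\<in>{0..1}. \<forall>q\<in>frontier \<Omega>.
     ((q - \<gamma> t0) \<bullet> unit_tangent t0)^2 \<le> K * ((\<gamma> t0 - q) \<bullet> outer_normal t0)"
    using frontier_within_parabola by blast
  have "closure \<Omega> \<subseteq> {y. ((y - \<gamma> t0) \<bullet> unit_tangent t0)^2 \<le> K * ((\<gamma> t0 - y) \<bullet> outer_normal t0)}"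
    (is "_ \<subseteq> ?P") if t0: "t0 \<in> {0..1}" for t0
  proof -
    have "frontier (closure \<Omega>) \<subseteq> ?P"
      using fr t0 interior_mono[OF closure_subset[of \<Omega>]] by (fastforce simp: frontier_def)
    then have "convex hull (frontier (closure \<Omega>)) \<subseteq> ?P"
      by (simp add: convex_parabola_region hull_minimal)
    moreover have "closure \<Omega> = convex hull (frontier (closure \<Omega>))"
      by (rule Krein_Milman_frontier)
        (use convex_domain bounded_domain in auto)
    ultimately show ?thesis by simp
  qed
  then show ?thesis using K closure_subset by blast
qed

section \<open>Two-sided bounds on the covariogram\<close>

lemma nearest_boundary_point:
  assumes w: "w \<in> \<Omega>"
  obtains t0 where "t0 \<in> {0..1}"
    and "\<gamma> t0 = w + infdist w (frontier \<Omega>) *\<^sub>R outer_normal t0"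
proof -
  define \<delta> where "\<delta> = infdist w (frontier \<Omega>)"
  have "frontier \<Omega> \<noteq> {}" using frontier_curve by auto
  then obtain p where p: "p \<in> frontier \<Omega>" "\<And>y. y \<in> frontier \<Omega> \<Longrightarrow> dist w p \<le> dist w y"
    using distance_attains_inf[OF frontier_closed] by metis
  have "dist w p \<le> \<delta>"
    unfolding \<delta>_def infdist_notempty[OF \<open>frontier \<Omega> \<noteq> {}\<close>] by (rule cINF_greatest) (use p in auto)
  then have dist_wp: "dist w p = \<delta>" using infdist_le[OF p(1), of w] by (simp add: \<delta>_def)
  have \<delta>: "0 < \<delta>" using infdist_frontier_pos[OF open_domain bounded_domain w] by (simp add: \<delta>_def)
  obtain t0 where t0: "t0 \<in> {0..1}" "p = \<gamma> t0" using p(1) frontier_curve by auto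
  define a where "a = (1 / \<delta>) *\<^sub>R (p - w)"
  have "norm a = 1" using dist_wp \<delta> by (simp add: a_def dist_norm norm_minus_commute)
  moreover have "\<forall>x\<in>\<Omega>. (x - \<gamma> t0) \<bullet> a \<le> 0"
    using convex_nearest_frontier_point_supports[OF convex_domain open_domain w p(1)] dist_wp \<delta> t0(2)
    by (simp add: a_def \<delta>_def divide_nonpos_pos)
  ultimately have "a = outer_normal t0" using supporting_normal_unique[OF t0(1)] by blast
  then have "\<delta> *\<^sub>R a = \<delta> *\<^sub>R outer_normal t0" by simp
  then have "p - w = \<delta> *\<^sub>R outer_normal t0" using \<delta> by (simp add: a_def)
  then show ?thesis using that t0 by (simp add: \<delta>_def algebra_simps)
qed

lemma covariogram_upper_at:
  assumes K: "0 < K" "\<forall>t0\<in>{0..1}. \<forall>x\<in>\<Omega>. ((x - \<gamma> t0) \<bullet> unit_tangent t0)^2 \<le> K * ((\<gamma> t0 - x) \<bullet> outer_normal t0)"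
    and t0: "t0 \<in> {0..1}" and \<delta>: "0 < \<delta>" and p: "\<gamma> t0 = w + \<delta> *\<^sub>R outer_normal t0"
  shows "covariogram \<Omega> (2 *\<^sub>R w) \<le> 4 * sqrt (2 * K * \<delta>) * \<delta>"
proof -
  define R where "R = oriented_rect w (unit_tangent t0) (sqrt (2 * K * \<delta>)) \<delta>"
  have sub: "\<Omega> \<inter> (\<lambda>v. 2 *\<^sub>R w - v) ` \<Omega> \<subseteq> R"
  proof
    fix x assume "x \<in> \<Omega> \<inter> (\<lambda>v. 2 *\<^sub>R w - v) ` \<Omega>"
    then have x: "x \<in> \<Omega>" "2 *\<^sub>R w - x \<in> \<Omega>" by (auto simp: mem_reflection_image)
    define n where "n = (x - w) \<bullet> outer_normal t0"
    have "(x - \<gamma> t0) \<bullet> outer_normal t0 = n - \<delta>"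
      "(2 *\<^sub>R w - x - \<gamma> t0) \<bullet> outer_normal t0 = - n - \<delta>"
      using p by (simp_all add: n_def scaleR_2 algebra_simps)
    then have n: "\<bar>n\<bar> \<le> \<delta>" "(\<gamma> t0 - x) \<bullet> outer_normal t0 \<le> 2 * \<delta>"
      using interior_strictly_below_tangent[OF t0 x(1)] interior_strictly_below_tangent[OF t0 x(2)]
      by (auto simp: inner_diff_left)
    have "((x - w) \<bullet> unit_tangent t0)^2 = ((x - \<gamma> t0) \<bullet> unit_tangent t0)^2"
      using p by (simp add: inner_diff_left inner_add_left)
    also have "\<dots> \<le> K * ((\<gamma> t0 - x) \<bullet> outer_normal t0)" using K(2) t0 x(1) by blast
    also have "\<dots> \<le> K * (2 * \<delta>)" using K(1) n(2) by (intro mult_left_mono) auto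
    finally have "\<bar>(x - w) \<bullet> unit_tangent t0\<bar> \<le> sqrt (2 * K * \<delta>)"
      by (intro real_le_rsqrt) simp
    moreover have "(x - w) \<bullet> rot90 (unit_tangent t0) = - n" by (simp add: n_def outer_normal_def)
    ultimately show "x \<in> R" using n(1) by (simp add: R_def oriented_rect_def)
  qed
  have "0 \<le> sqrt (2 * K * \<delta>)" using K \<delta> by simp
  note R = oriented_rect_measure[OF norm_unit_tangent this less_imp_le[OF \<delta>], of w t0]
  have "covariogram \<Omega> (2 *\<^sub>R w) \<le> measure lebesgue R"
    unfolding covariogram_def R_def
    using covariogram_set_lmeasurable[OF open_domain bounded_domain] sub R
    by (intro measure_mono_fmeasurable) (auto simp: R_def)
  then show ?thesis using R by (simp add: R_def)
qed

lemma covariogram_upper_bound: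
  "\<exists>C0>0. \<forall>w\<in>\<Omega>. covariogram \<Omega> (2 *\<^sub>R w) \<le> C0 * infdist w (frontier \<Omega>) powr (3/2)"
proof -
  obtain K where K: "0 < K" "\<forall>t0\<in>{0..1}. \<forall>x\<in>\<Omega>.
      ((x - \<gamma> t0) \<bullet> unit_tangent t0)^2 \<le> K * ((\<gamma> t0 - x) \<bullet> outer_normal t0)"
    using domain_within_parabola by blast
  have "covariogram \<Omega> (2 *\<^sub>R w) \<le> 4 * sqrt (2 * K) * infdist w (frontier \<Omega>) powr (3/2)"
    if w: "w \<in> \<Omega>" for w
  proof -
    define \<delta> where "\<delta> = infdist w (frontier \<Omega>)"
    have \<delta>: "0 < \<delta>" using infdist_frontier_pos[OF open_domain bounded_domain w] by (simp add: \<delta>_def)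
    obtain t0 where "t0 \<in> {0..1}" "\<gamma> t0 = w + \<delta> *\<^sub>R outer_normal t0"
      using nearest_boundary_point[OF w] by (auto simp: \<delta>_def)
    from covariogram_upper_at[OF K this(1) \<delta> this(2)] show ?thesis
      using \<delta> by (simp add: \<delta>_def powr_three_halves real_sqrt_mult algebra_simps)
  qed
  then show ?thesis using K by (intro exI[of _ "4 * sqrt (2 * K)"]) auto
qed

lemma boundary_point_near_tangent:
  assumes m0: "\<forall>t\<in>{0..1}. m0 \<le> norm (\<gamma>' t)" and M: "\<forall>t\<in>{-1..2}. norm (\<gamma>'' t) \<le> M"
    and t0: "t0 \<in> {0..1}" and p: "\<gamma> t0 = w + \<delta> *\<^sub>R outer_normal t0"
    and h: "0 < h" "h \<le> 1" "M * h^2 = \<delta>/2" "M * h \<le> m0/2"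
    and \<sigma>: "\<sigma> = 1 \<or> \<sigma> = -1"
  shows "h * m0 / 2 \<le> \<sigma> * ((\<gamma> (t0 + \<sigma> * h) - w) \<bullet> unit_tangent t0)"
    and "\<delta>/2 \<le> (\<gamma> (t0 + \<sigma> * h) - w) \<bullet> outer_normal t0"
    and "(\<gamma> (t0 + \<sigma> * h) - w) \<bullet> outer_normal t0 \<le> \<delta>"
proof -
  define u where "u = \<sigma> * h"
  have u: "\<bar>u\<bar> = h" "u^2 = h^2" "\<sigma> * u = h" "\<bar>\<sigma>\<bar> = 1"
    using \<sigma> h by (auto simp: u_def)
  define E where "E = \<gamma> (t0 + u) - \<gamma> t0 - u *\<^sub>R \<gamma>' t0"
  have "norm E \<le> M * u^2" unfolding E_def by (rule taylor1_remainder[OF M t0]) (use u h in auto)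
  then have "norm E \<le> \<delta>/2" using u h by simp
  then have ET: "\<bar>E \<bullet> unit_tangent t0\<bar> \<le> \<delta>/2" and EN: "\<bar>E \<bullet> outer_normal t0\<bar> \<le> \<delta>/2"
    using abs_inner_le_norm_unit[OF norm_unit_tangent, of E t0]
      abs_inner_le_norm_unit[OF norm_outer_normal, of E t0] by linarith+
  have qw: "\<gamma> (t0 + u) - w = E + u *\<^sub>R \<gamma>' t0 + \<delta> *\<^sub>R outer_normal t0"
    using p by (simp add: E_def algebra_simps)
  have "(M * h) * h \<le> (m0/2) * h" using h by (intro mult_right_mono) auto
  then have "\<delta>/2 \<le> h * m0 / 2" using h(3) by (simp add: power2_eq_square algebra_simps)
  moreover have "h * m0 \<le> h * norm (\<gamma>' t0)" using m0 t0 h by (intro mult_left_mono) auto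
  moreover have "\<bar>\<sigma> * (E \<bullet> unit_tangent t0)\<bar> \<le> \<delta>/2" using ET u(4) by (simp add: abs_mult)
  moreover have "\<sigma> * ((\<gamma> (t0 + u) - w) \<bullet> unit_tangent t0) = \<sigma> * (E \<bullet> unit_tangent t0) + h * norm (\<gamma>' t0)"
    using u(3) unfolding qw by (simp add: deriv1_inner_unit_tangent algebra_simps)
  ultimately have "h * m0 / 2 \<le> \<sigma> * ((\<gamma> (t0 + u) - w) \<bullet> unit_tangent t0)" by linarith
  then show "h * m0 / 2 \<le> \<sigma> * ((\<gamma> (t0 + \<sigma> * h) - w) \<bullet> unit_tangent t0)"
    by (simp add: u_def)
  have "(\<gamma> (t0 + u) - w) \<bullet> outer_normal t0 = E \<bullet> outer_normal t0 + \<delta>"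
    unfolding qw by (simp add: inner_add_left)
  then show "\<delta>/2 \<le> (\<gamma> (t0 + \<sigma> * h) - w) \<bullet> outer_normal t0" using EN by (simp add: u_def)
  have "\<gamma> (t0 + u) \<in> closure \<Omega>" by (rule curve_in_closure) (use t0 u h in auto)
  from closure_below_tangent[OF t0 this]
  show "(\<gamma> (t0 + \<sigma> * h) - w) \<bullet> outer_normal t0 \<le> \<delta>"
    using p by (simp add: u_def inner_diff_left inner_add_left)
qed

text \<open>Convexity carries the point on the tangent line through \<open>w\<close> at which the segment from
  \<open>w - (\<delta>/2) N\<close> to \<open>q\<close> crosses it into \<open>\<Omega>\<close>; its tangential coordinate is at least a third
  of that of \<open>q\<close> because \<open>q\<close> is at most \<open>\<delta>\<close> above the line.\<close>
lemma tangent_line_point_in_domain: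
  assumes \<delta>: "0 < \<delta>" and ball: "ball w \<delta> \<subseteq> \<Omega>" and q: "q \<in> closure \<Omega>" "q \<notin> \<Omega>"
    and height: "\<delta>/2 \<le> (q - w) \<bullet> outer_normal t0" "(q - w) \<bullet> outer_normal t0 \<le> \<delta>"
  obtains l where "1/3 \<le> l" "w + (l * ((q - w) \<bullet> unit_tangent t0)) *\<^sub>R unit_tangent t0 \<in> \<Omega>"
proof -
  define A where "A = (q - w) \<bullet> unit_tangent t0"
  define B where "B = (q - w) \<bullet> outer_normal t0"
  define y where "y = w - (\<delta>/2) *\<^sub>R outer_normal t0"
  have "y \<in> ball w \<delta>" using \<delta> by (simp add: y_def dist_norm)
  then have yO: "y \<in> \<Omega>" using ball by blast
  define l where "l = (\<delta>/2) / (B + \<delta>/2)"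
  have Bp: "B + \<delta>/2 > 0" using height \<delta> by (simp add: B_def)
  have l: "0 < l" "l < 1" using \<delta> Bp height by (simp_all add: l_def B_def divide_less_eq)
  have "(\<delta>/2) / (3 * (\<delta>/2)) \<le> l"
    unfolding l_def using Bp \<delta> height by (intro divide_left_mono) (auto simp: B_def)
  then have l3: "1/3 \<le> l" using \<delta> by simp
  define x where "x = (1 - l) *\<^sub>R y + l *\<^sub>R q"
  have "x \<in> open_segment y q" unfolding in_segment(2) x_def using yO q l by blast
  then have xO: "x \<in> \<Omega>"
    using in_interior_closure_convex_segment[OF convex_domain _ q(1), of y] yO
      interior_open[OF open_domain] by auto
  have lB: "l * B - (1 - l) * (\<delta>/2) = 0" unfolding l_def using Bp by (simp add: field_simps)
  have qw: "q - w = A *\<^sub>R unit_tangent t0 + B *\<^sub>R outer_normal t0"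
    unfolding A_def B_def by (rule frame_decomp)
  have "x - w = (1 - l) *\<^sub>R (y - w) + l *\<^sub>R (q - w)" by (simp add: x_def algebra_simps)
  also have "\<dots> = (l * A) *\<^sub>R unit_tangent t0 + (l * B - (1 - l) * (\<delta>/2)) *\<^sub>R outer_normal t0"
    unfolding qw y_def by (simp add: algebra_simps)
  finally have "x - w = (l * A) *\<^sub>R unit_tangent t0" unfolding lB by simp
  then have "x = w + (l * A) *\<^sub>R unit_tangent t0" by (simp add: algebra_simps)
  then show ?thesis using that l3 xO by (simp add: A_def)
qed

lemma tangent_segment_in_domain:
  assumes m0: "0 < m0" "\<forall>t\<in>{0..1}. m0 \<le> norm (\<gamma>' t)" and M: "\<forall>t\<in>{-1..2}. norm (\<gamma>'' t) \<le> M"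
    and t0: "t0 \<in> {0..1}" and \<delta>: "0 < \<delta>" and p: "\<gamma> t0 = w + \<delta> *\<^sub>R outer_normal t0"
    and ball: "ball w \<delta> \<subseteq> \<Omega>"
    and h: "0 < h" "h \<le> 1" "M * h^2 = \<delta>/2" "M * h \<le> m0/2"
    and s: "\<bar>s\<bar> \<le> h * m0 / 6"
  shows "w + s *\<^sub>R unit_tangent t0 \<in> \<Omega>"
proof -
  have reach: "\<exists>\<tau>\<ge>h * m0 / 6. w + (\<sigma> * \<tau>) *\<^sub>R unit_tangent t0 \<in> \<Omega>" if \<sigma>: "\<sigma> = 1 \<or> \<sigma> = -1" for \<sigma>
  proof -
    define q where "q = \<gamma> (t0 + \<sigma> * h)"
    note near = boundary_point_near_tangent[OF m0(2) M t0 p h \<sigma>, folded q_def]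
    have "t0 + \<sigma> * h \<in> {-1..2}" using t0 h \<sigma> by auto
    then have q: "q \<in> closure \<Omega>" "q \<notin> \<Omega>"
      using curve_in_frontier frontier_eq by (auto simp: q_def)
    obtain l where l: "1/3 \<le> l" "w + (l * ((q - w) \<bullet> unit_tangent t0)) *\<^sub>R unit_tangent t0 \<in> \<Omega>"
      using tangent_line_point_in_domain[OF \<delta> ball q near(2,3)] by blast
    define \<tau> where "\<tau> = l * (\<sigma> * ((q - w) \<bullet> unit_tangent t0))"
    have "(1/3) * (h * m0 / 2) \<le> \<tau>"
      unfolding \<tau>_def using l(1) near(1) h m0 by (intro mult_mono) auto
    moreover have "\<sigma> * \<tau> = l * ((q - w) \<bullet> unit_tangent t0)" using \<sigma> by (auto simp: \<tau>_def)
    ultimately show ?thesis using l(2) by (intro exI[of _ \<tau>]) auto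
  qed
  have "w \<in> \<Omega>" using ball \<delta> by auto
  have "0 < h * m0 / 6" using h m0 by simp
  show ?thesis
  proof (cases "0 \<le> s")
    case True
    obtain \<tau> where \<tau>: "h * m0 / 6 \<le> \<tau>" "w + \<tau> *\<^sub>R unit_tangent t0 \<in> \<Omega>" using reach[of 1] by auto
    have "0 < \<tau>" using \<tau>(1) \<open>0 < h * m0 / 6\<close> by linarith
    then show ?thesis
      using convex_mem_between[OF convex_domain \<open>w \<in> \<Omega>\<close> \<tau>(2)] True s \<tau>(1)
      by (simp add: divide_le_eq)
  next
    case False
    obtain \<tau> where \<tau>: "h * m0 / 6 \<le> \<tau>" "w + (- \<tau>) *\<^sub>R unit_tangent t0 \<in> \<Omega>" using reach[of "-1"] by auto
    have "0 < \<tau>" using \<tau>(1) \<open>0 < h * m0 / 6\<close> by linarith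
    then show ?thesis
      using convex_mem_between[OF convex_domain \<open>w \<in> \<Omega>\<close> \<tau>(2)] False s \<tau>(1)
      by (simp add: divide_nonpos_pos divide_le_eq le_divide_eq)
  qed
qed

lemma covariogram_lower_near_boundary:
  assumes m0: "0 < m0" "\<forall>t\<in>{0..1}. m0 \<le> norm (\<gamma>' t)" and M: "\<forall>t\<in>{-1..2}. norm (\<gamma>'' t) \<le> M"
    and t0: "t0 \<in> {0..1}" and \<delta>: "0 < \<delta>" and p: "\<gamma> t0 = w + \<delta> *\<^sub>R outer_normal t0"
    and ball: "ball w \<delta> \<subseteq> \<Omega>"
    and h: "0 < h" "h \<le> 1" "M * h^2 = \<delta>/2" "M * h \<le> m0/2"
  shows "h * m0 * \<delta> / 12 \<le> covariogram \<Omega> (2 *\<^sub>R w)"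
proof -
  define \<alpha> where "\<alpha> = h * m0 / 6"
  have "oriented_rect w (unit_tangent t0) (\<alpha>/2) (\<delta>/4) \<subseteq> \<Omega>"
  proof
    fix x assume "x \<in> oriented_rect w (unit_tangent t0) (\<alpha>/2) (\<delta>/4)"
    then have st: "\<bar>(x - w) \<bullet> unit_tangent t0\<bar> \<le> \<alpha>/2" "\<bar>(x - w) \<bullet> rot90 (unit_tangent t0)\<bar> \<le> \<delta>/4"
      by (auto simp: oriented_rect_def)
    define a where "a = (x - w) \<bullet> unit_tangent t0"
    define b where "b = (x - w) \<bullet> rot90 (unit_tangent t0)"
    define a1 where "a1 = w + (2 * a) *\<^sub>R unit_tangent t0"
    define a2 where "a2 = w + (2 * b) *\<^sub>R rot90 (unit_tangent t0)"
    have "a1 \<in> \<Omega>"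
      unfolding a1_def by (rule tangent_segment_in_domain[OF m0 M t0 \<delta> p ball h]) (use st in \<open>auto simp: a_def \<alpha>_def\<close>)
    moreover have "a2 \<in> ball w \<delta>" using st \<delta> by (simp add: a2_def b_def dist_norm)
    then have "a2 \<in> \<Omega>" using ball by blast
    ultimately have "(1/2) *\<^sub>R a1 + (1/2) *\<^sub>R a2 \<in> \<Omega>" using convexD[OF convex_domain] by simp
    moreover have "x = w + a *\<^sub>R unit_tangent t0 + b *\<^sub>R rot90 (unit_tangent t0)"
      using orthonormal_decomp_rot90[OF norm_unit_tangent[of t0], of "x - w"]
      by (simp add: a_def b_def algebra_simps)
    then have "(1/2) *\<^sub>R a1 + (1/2) *\<^sub>R a2 = x"
      by (simp add: a1_def a2_def vec_eq_iff forall_2 field_simps)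
    ultimately show "x \<in> \<Omega>" by simp
  qed
  then have "4 * (\<alpha>/2) * (\<delta>/4) \<le> covariogram \<Omega> (2 *\<^sub>R w)"
    using h m0 \<delta> by (intro covariogram_ge_rect[OF open_domain bounded_domain _ norm_unit_tangent]) (auto simp: \<alpha>_def)
  then show ?thesis by (simp add: \<alpha>_def)
qed

lemma covariogram_lower_small_distance:
  assumes m0: "0 < m0" "\<forall>t\<in>{0..1}. m0 \<le> norm (\<gamma>' t)"
    and M: "1 \<le> M" "\<forall>t\<in>{-1..2}. norm (\<gamma>'' t) \<le> M"
    and w: "w \<in> \<Omega>" and \<delta>_def: "\<delta> = infdist w (frontier \<Omega>)"
    and small: "\<delta> \<le> 2 * M" "\<delta> \<le> m0^2 / (2 * M)"
  shows "m0 / (12 * sqrt (2 * M)) * (\<delta> * sqrt \<delta>) \<le> covariogram \<Omega> (2 *\<^sub>R w)"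
proof -
  have \<delta>: "0 < \<delta>" using infdist_frontier_pos[OF open_domain bounded_domain w] by (simp add: \<delta>_def)
  have ball: "ball w \<delta> \<subseteq> \<Omega>" using ball_infdist_frontier_subset[OF w] by (simp add: \<delta>_def)
  obtain t0 where t0: "t0 \<in> {0..1}" "\<gamma> t0 = w + \<delta> *\<^sub>R outer_normal t0"
    using nearest_boundary_point[OF w] by (auto simp: \<delta>_def)
  define h where "h = sqrt (\<delta> / (2 * M))"
  have "\<delta> / (2 * M) \<le> 1" using small M by simp
  then have h: "0 < h" "h \<le> 1" "M * h^2 = \<delta>/2" using \<delta> M by (auto simp: h_def)
  have "\<delta> / (2 * M) \<le> (m0 / (2 * M))^2" using small M
    by (simp add: divide_le_eq field_simps power2_eq_square)
  then have "h \<le> sqrt ((m0 / (2 * M))^2)" unfolding h_def by (rule real_sqrt_le_mono)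
  also have "\<dots> = m0 / (2 * M)" using m0 M by simp
  finally have "M * h \<le> m0/2" using M by (simp add: pos_le_divide_eq mult_ac)
  with covariogram_lower_near_boundary[OF m0 M(2) t0(1) \<delta> t0(2) ball h]
  have "h * m0 * \<delta> / 12 \<le> covariogram \<Omega> (2 *\<^sub>R w)" by blast
  moreover have "h * m0 * \<delta> / 12 = m0 / (12 * sqrt (2 * M)) * (\<delta> * sqrt \<delta>)"
    by (simp add: h_def real_sqrt_divide algebra_simps)
  ultimately show ?thesis by simp
qed

text \<open>Far from the boundary the inscribed disc alone gives a bound of order \<open>\<delta>\<^sup>2\<close>, and
  \<open>\<delta>\<^sup>2 \<ge> \<surd>d\<^sub>0 \<delta> \<surd>\<delta>\<close> once \<open>\<delta> \<ge> d\<^sub>0\<close>.\<close>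
lemma covariogram_lower_bound:
  "\<exists>c0>0. \<forall>w\<in>\<Omega>. c0 * infdist w (frontier \<Omega>) powr (3/2) \<le> covariogram \<Omega> (2 *\<^sub>R w)"
proof -
  obtain m0 where m0: "m0 > 0" "\<forall>t\<in>{0..1}. m0 \<le> norm (\<gamma>' t)" using speed_lower_bound by blast
  obtain M where M: "M \<ge> 1" "\<forall>t\<in>{-1..2}. norm (\<gamma>'' t) \<le> M" using deriv2_bound by blast
  define d0 where "d0 = min (2 * M) (m0^2 / (2 * M))"
  define c0 where "c0 = min (m0 / (12 * sqrt (2 * M))) (sqrt d0)"
  have c0: "c0 > 0" using M m0 by (simp add: d0_def c0_def)
  have "c0 * (\<delta> * sqrt \<delta>) \<le> covariogram \<Omega> (2 *\<^sub>R w)"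
    if w: "w \<in> \<Omega>" and \<delta>_def: "\<delta> = infdist w (frontier \<Omega>)" for w \<delta>
  proof -
    have \<delta>: "0 \<le> \<delta>" using infdist_nonneg by (simp add: \<delta>_def)
    show ?thesis
    proof (cases "\<delta> \<le> d0")
      case True
      then have "m0 / (12 * sqrt (2 * M)) * (\<delta> * sqrt \<delta>) \<le> covariogram \<Omega> (2 *\<^sub>R w)"
        using covariogram_lower_small_distance[OF m0 M w \<delta>_def] by (simp add: d0_def)
      moreover have "c0 * (\<delta> * sqrt \<delta>) \<le> m0 / (12 * sqrt (2 * M)) * (\<delta> * sqrt \<delta>)"
        using \<delta> by (intro mult_right_mono) (auto simp: c0_def)
      ultimately show ?thesis by linarith
    next
      case False
      then have "c0 * (\<delta> * sqrt \<delta>) \<le> sqrt \<delta> * (\<delta> * sqrt \<delta>)"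
        using \<delta> by (intro mult_right_mono) (auto simp: c0_def min.coboundedI2)
      also have "\<dots> = \<delta>^2" using \<delta> by (simp add: power2_eq_square algebra_simps)
      finally show ?thesis
        using sq_infdist_frontier_le_covariogram[OF open_domain bounded_domain w] by (simp add: \<delta>_def)
    qed
  qed
  then show ?thesis using c0 by (auto simp: powr_three_halves infdist_nonneg)
qed

end

theorem mainTheorem18:
  fixes \<Omega> :: "(real^2) set"
  assumes "open \<Omega>" and "\<Omega> \<noteq> {}" and "bounded \<Omega>" and "convex \<Omega>"
    and "C2_pos_curv_boundary \<Omega>"
  shows "\<exists>c C. c > 0 \<and> C > 0 \<and>
    (\<forall>z \<in> scale2 \<Omega>.
       c * infdist z (frontier (scale2 \<Omega>)) powr (3/2) \<le> omega \<Omega> z \<and>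
       omega \<Omega> z \<le> C * infdist z (frontier (scale2 \<Omega>)) powr (3/2))"
proof -
  obtain \<gamma> \<gamma>' \<gamma>'' where "convex_C2_domain \<Omega> \<gamma> \<gamma>' \<gamma>''"
    using assms unfolding C2_pos_curv_boundary_def convex_C2_domain_def by blast
  then interpret convex_C2_domain \<Omega> \<gamma> \<gamma>' \<gamma>'' .
  obtain c0 where "c0 > 0"
    "\<forall>w\<in>\<Omega>. c0 * infdist w (frontier \<Omega>) powr (3/2) \<le> covariogram \<Omega> (2 *\<^sub>R w)"
    using covariogram_lower_bound by blast
  moreover obtain C0 where "C0 > 0"
    "\<forall>w\<in>\<Omega>. covariogram \<Omega> (2 *\<^sub>R w) \<le> C0 * infdist w (frontier \<Omega>) powr (3/2)"
    using covariogram_upper_bound by blast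
  ultimately show ?thesis
    using omega_bounds_of_covariogram_bounds[OF assms(1,3,2)] by blast
qed

end
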